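(* Let $p$ be a prime, $n$ a natural number, and $\lambda_1\geq\cdots\geq\lambda_t$ a partition of $n$. Let $U=\mathbb{Z}/p^{\lambda_1}\mathbb{Z}\oplus\cdots\oplus\mathbb{Z}/p^{\lambda_t}\mathbb{Z}$ and let $V$ be the $\mathbb{F}_p[T]/(T^n)$-module $\mathbb{F}_p[T]/(T^{\lambda_1})\oplus\cdots\oplus\mathbb{F}_p[T]/(T^{\lambda_t})$. Then: (1) There is a one-to-one correspondence between isomorphism classes of rings $R$ whose additive group is $U$ and which satisfy $p[R,R]=0$, and isomorphism classes of $\mathbb{F}_p[T]/(T^n)$-algebras $A$ whose underlying module is $V$ and which satisfy $T[A,A]=0$. (2) This correspondence maps isomorphism classes of Lie rings exactly onto isomorphism classes of $\mathbb{F}_p[T]/(T^n)$-Lie algebras; and for corresponding Lie ring $R$ and Lie algebra $A$, $R$ is nilpotent if and only if $A$ is nilpotent.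
   Context: For a commutative ring $C$ with $1$, a $C$-algebra is a unital $C$-module $A$ together with a $C$-bilinear multiplication $[\cdot,\cdot]:A\times A\to A$ (i.e. an element of $\mathrm{Hom}_C(A\otimes_C A,A)$); no associativity or identity element is assumed. A ring means a $\mathbb{Z}$-algebra in this sense. $[R,R]$ denotes the additive subgroup (submodule) generated by all products, so $p[R,R]=0$ means $p\cdot[x,y]=0$ for all $x,y$, and $T[A,A]=0$ means $T\cdot[a,b]=0$ for all $a,b$. A Lie ring (resp. Lie algebra) is such an algebra with $[x,x]=0$ for all $x$ and satisfying the Jacobi identity $[[x,y],z]+[[y,z],x]+[[z,x],y]=0$. Isomorphisms are bijections that are module isomorphisms preserving multiplication. *)

theory Defs
  imports "HOL-Computational_Algebra.Primes"
begin

text \<open>A set Ops of unary maps on G encodes scalar multiplication by the elements of a base ring C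
  (Ops = {} for rings, i.e. Z-algebras, where Z-linearity is just additivity).\<close>

definition biadditive :: "'a set \<Rightarrow> ('a \<Rightarrow> 'a \<Rightarrow> 'a) \<Rightarrow> ('a \<Rightarrow> 'a \<Rightarrow> 'a) \<Rightarrow> bool" where
  "biadditive G add m \<longleftrightarrow>
     (\<forall>x\<in>G. \<forall>y\<in>G. m x y \<in> G) \<and>
     (\<forall>x\<in>G. \<forall>y\<in>G. \<forall>z\<in>G. m (add x y) z = add (m x z) (m y z)
                         \<and> m x (add y z) = add (m x y) (m x z))"

definition ops_compatible :: "'a set \<Rightarrow> ('a \<Rightarrow> 'a) set \<Rightarrow> ('a \<Rightarrow> 'a \<Rightarrow> 'a) \<Rightarrow> bool" where
  "ops_compatible G Ops m \<longleftrightarrow>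
     (\<forall>\<phi>\<in>Ops. \<forall>x\<in>G. \<forall>y\<in>G. m (\<phi> x) y = \<phi> (m x y) \<and> m x (\<phi> y) = \<phi> (m x y))"

fun nsmul :: "('a \<Rightarrow> 'a \<Rightarrow> 'a) \<Rightarrow> 'a \<Rightarrow> nat \<Rightarrow> 'a \<Rightarrow> 'a" where
  "nsmul add zero 0 x = zero"
| "nsmul add zero (Suc k) x = add x (nsmul add zero k x)"

definition is_lie :: "'a set \<Rightarrow> ('a \<Rightarrow> 'a \<Rightarrow> 'a) \<Rightarrow> 'a \<Rightarrow> ('a \<Rightarrow> 'a \<Rightarrow> 'a) \<Rightarrow> bool" where
  "is_lie G add zero m \<longleftrightarrow>
     (\<forall>x\<in>G. m x x = zero) \<and>
     (\<forall>x\<in>G. \<forall>y\<in>G. \<forall>z\<in>G.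
        add (add (m (m x y) z) (m (m y z) x)) (m (m z x) y) = zero)"

definition struct_iso :: "'a set \<Rightarrow> ('a \<Rightarrow> 'a \<Rightarrow> 'a) \<Rightarrow> ('a \<Rightarrow> 'a) set \<Rightarrow>
    ('a \<Rightarrow> 'a \<Rightarrow> 'a) \<Rightarrow> ('a \<Rightarrow> 'a \<Rightarrow> 'a) \<Rightarrow> ('a \<Rightarrow> 'a) \<Rightarrow> bool" where
  "struct_iso G add Ops m1 m2 f \<longleftrightarrow>
     bij_betw f G G \<and>
     (\<forall>x\<in>G. \<forall>y\<in>G. f (add x y) = add (f x) (f y)) \<and>
     (\<forall>\<phi>\<in>Ops. \<forall>x\<in>G. f (\<phi> x) = \<phi> (f x)) \<and>
     (\<forall>x\<in>G. \<forall>y\<in>G. f (m1 x y) = m2 (f x) (f y))"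

definition iso_classes :: "('a \<Rightarrow> 'a \<Rightarrow> 'a) set \<Rightarrow> 'a set \<Rightarrow> ('a \<Rightarrow> 'a \<Rightarrow> 'a) \<Rightarrow>
    ('a \<Rightarrow> 'a) set \<Rightarrow> ('a \<Rightarrow> 'a \<Rightarrow> 'a) set set" where
  "iso_classes S G add Ops = {{m' \<in> S. \<exists>f. struct_iso G add Ops m m' f} | m. m \<in> S}"

inductive_set prod_span :: "'a set \<Rightarrow> ('a \<Rightarrow> 'a \<Rightarrow> 'a) \<Rightarrow> 'a \<Rightarrow> ('a \<Rightarrow> 'a) \<Rightarrow>
    ('a \<Rightarrow> 'a) set \<Rightarrow> ('a \<Rightarrow> 'a \<Rightarrow> 'a) \<Rightarrow> 'a set \<Rightarrow> 'a set"
  for G add zero neg Ops m S where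
  zero: "zero \<in> prod_span G add zero neg Ops m S"
| prod: "x \<in> S \<Longrightarrow> y \<in> G \<Longrightarrow> m x y \<in> prod_span G add zero neg Ops m S"
| add: "a \<in> prod_span G add zero neg Ops m S \<Longrightarrow> b \<in> prod_span G add zero neg Ops m S
        \<Longrightarrow> add a b \<in> prod_span G add zero neg Ops m S"
| neg: "a \<in> prod_span G add zero neg Ops m S \<Longrightarrow> neg a \<in> prod_span G add zero neg Ops m S"
| op: "\<phi> \<in> Ops \<Longrightarrow> a \<in> prod_span G add zero neg Ops m S \<Longrightarrow> \<phi> a \<in> prod_span G add zero neg Ops m S"

text \<open>Lower central series: lcs 0 = A (i.e. gamma_1), lcs (k+1) = [lcs k, A].\<close>
fun lcs :: "'a set \<Rightarrow> ('a \<Rightarrow> 'a \<Rightarrow> 'a) \<Rightarrow> 'a \<Rightarrow> ('a \<Rightarrow> 'a) \<Rightarrow>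
    ('a \<Rightarrow> 'a) set \<Rightarrow> ('a \<Rightarrow> 'a \<Rightarrow> 'a) \<Rightarrow> nat \<Rightarrow> 'a set" where
  "lcs G add zero neg Ops m 0 = G"
| "lcs G add zero neg Ops m (Suc k) = prod_span G add zero neg Ops m (lcs G add zero neg Ops m k)"

definition nilpotent_alg :: "'a set \<Rightarrow> ('a \<Rightarrow> 'a \<Rightarrow> 'a) \<Rightarrow> 'a \<Rightarrow> ('a \<Rightarrow> 'a) \<Rightarrow>
    ('a \<Rightarrow> 'a) set \<Rightarrow> ('a \<Rightarrow> 'a \<Rightarrow> 'a) \<Rightarrow> bool" where
  "nilpotent_alg G add zero neg Ops m \<longleftrightarrow> (\<exists>k. lcs G add zero neg Ops m k = {zero})"

definition is_partition :: "nat list \<Rightarrow> nat \<Rightarrow> bool" where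
  "is_partition lam n \<longleftrightarrow> sorted_wrt (\<ge>) lam \<and> (\<forall>l\<in>set lam. 0 < l) \<and> sum_list lam = n"

definition U_car :: "nat \<Rightarrow> nat list \<Rightarrow> (nat \<Rightarrow> int) set" where
  "U_car p lam = {x. (\<forall>i<length lam. 0 \<le> x i \<and> x i < int p ^ (lam ! i)) \<and>
                     (\<forall>i\<ge>length lam. x i = 0)}"

definition U_add :: "nat \<Rightarrow> nat list \<Rightarrow> (nat \<Rightarrow> int) \<Rightarrow> (nat \<Rightarrow> int) \<Rightarrow> (nat \<Rightarrow> int)" where
  "U_add p lam x y = (\<lambda>i. if i < length lam then (x i + y i) mod (int p ^ (lam ! i)) else 0)"

definition U_neg :: "nat \<Rightarrow> nat list \<Rightarrow> (nat \<Rightarrow> int) \<Rightarrow> (nat \<Rightarrow> int)" where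
  "U_neg p lam x = (\<lambda>i. if i < length lam then (- x i) mod (int p ^ (lam ! i)) else 0)"

definition U_zero :: "nat \<Rightarrow> int" where
  "U_zero = (\<lambda>i. 0)"

text \<open>Elements of C: coefficient sequences c with 0 \<le> c j < p for j < n, 0 otherwise.\<close>
definition C_car :: "nat \<Rightarrow> nat \<Rightarrow> (nat \<Rightarrow> int) set" where
  "C_car p n = {c. (\<forall>j<n. 0 \<le> c j \<and> c j < int p) \<and> (\<forall>j\<ge>n. c j = 0)}"

definition T_el :: "nat \<Rightarrow> nat \<Rightarrow> int" where
  "T_el n = (\<lambda>j. if j = 1 \<and> 1 < n then 1 else 0)"

text \<open>Elements of V: v i j is the coefficient of T^j in the i-th summand.\<close>
definition V_car :: "nat \<Rightarrow> nat list \<Rightarrow> (nat \<Rightarrow> nat \<Rightarrow> int) set" where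
  "V_car p lam = {v. (\<forall>i j. (i < length lam \<and> j < lam ! i) \<longrightarrow> 0 \<le> v i j \<and> v i j < int p) \<and>
                     (\<forall>i j. \<not> (i < length lam \<and> j < lam ! i) \<longrightarrow> v i j = 0)}"

definition V_add :: "nat \<Rightarrow> nat list \<Rightarrow> (nat \<Rightarrow> nat \<Rightarrow> int) \<Rightarrow> (nat \<Rightarrow> nat \<Rightarrow> int) \<Rightarrow> (nat \<Rightarrow> nat \<Rightarrow> int)" where
  "V_add p lam v w = (\<lambda>i j. if i < length lam \<and> j < lam ! i then (v i j + w i j) mod int p else 0)"

definition V_neg :: "nat \<Rightarrow> nat list \<Rightarrow> (nat \<Rightarrow> nat \<Rightarrow> int) \<Rightarrow> (nat \<Rightarrow> nat \<Rightarrow> int)" where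
  "V_neg p lam v = (\<lambda>i j. if i < length lam \<and> j < lam ! i then (- v i j) mod int p else 0)"

definition V_zero :: "nat \<Rightarrow> nat \<Rightarrow> int" where
  "V_zero = (\<lambda>i j. 0)"

definition V_act :: "nat \<Rightarrow> nat list \<Rightarrow> (nat \<Rightarrow> int) \<Rightarrow> (nat \<Rightarrow> nat \<Rightarrow> int) \<Rightarrow> (nat \<Rightarrow> nat \<Rightarrow> int)" where
  "V_act p lam c v = (\<lambda>i j. if i < length lam \<and> j < lam ! i
                             then (\<Sum>k\<in>{0..j}. c k * v i (j - k)) mod int p else 0)"

definition V_ops :: "nat \<Rightarrow> nat \<Rightarrow> nat list \<Rightarrow> ((nat \<Rightarrow> nat \<Rightarrow> int) \<Rightarrow> (nat \<Rightarrow> nat \<Rightarrow> int)) set" where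
  "V_ops p n lam = (\<lambda>c. V_act p lam c) ` C_car p n"

text \<open>Rings (Z-algebras) with additive group U and p[R,R] = 0.\<close>
definition ring_structs :: "nat \<Rightarrow> nat list \<Rightarrow> ((nat \<Rightarrow> int) \<Rightarrow> (nat \<Rightarrow> int) \<Rightarrow> (nat \<Rightarrow> int)) set" where
  "ring_structs p lam = {m. biadditive (U_car p lam) (U_add p lam) m \<and>
      (\<forall>x\<in>U_car p lam. \<forall>y\<in>U_car p lam. nsmul (U_add p lam) U_zero p (m x y) = U_zero)}"

text \<open>C-algebras with underlying module V and T[A,A] = 0.\<close>
definition alg_structs :: "nat \<Rightarrow> nat \<Rightarrow> nat list \<Rightarrow>
    ((nat \<Rightarrow> nat \<Rightarrow> int) \<Rightarrow> (nat \<Rightarrow> nat \<Rightarrow> int) \<Rightarrow> (nat \<Rightarrow> nat \<Rightarrow> int)) set" where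
  "alg_structs p n lam = {m. biadditive (V_car p lam) (V_add p lam) m \<and>
      ops_compatible (V_car p lam) (V_ops p n lam) m \<and>
      (\<forall>x\<in>V_car p lam. \<forall>y\<in>V_car p lam. V_act p lam (T_el n) (m x y) = V_zero)}"

definition ring_classes where
  "ring_classes p lam = iso_classes (ring_structs p lam) (U_car p lam) (U_add p lam) {}"

definition alg_classes where
  "alg_classes p n lam = iso_classes (alg_structs p n lam) (V_car p lam) (V_add p lam) (V_ops p n lam)"

end

theory Submission
  imports Defs "HOL-Computational_Algebra.Formal_Power_Series"
begin

(* Base-p expansion identifies the sets U and V. It is not additive, but on the socles
   soc U = {x. p x = 0} and soc V = {v. T v = 0} it is additive and turns multiplication by the
   constant term c_0 into the action of c, and on the tops U/pU and V/TV it preserves the lowest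
   digit. A biadditive m on U with p[U,U] = 0 takes values in soc U and only depends on its
   arguments modulo pU, and likewise for T on V. Hence transporting m along the digit map is a
   bijection from ring structures to algebra structures; it preserves the Jacobi identity and,
   since the lower central series lies in the socle from its second term on, nilpotency.
   It also matches isomorphisms: an additive endomorphism of U is an integer matrix (X i j) with
   p^(lam_j - lam_i) dividing X i j, a C-linear endomorphism of V is a matrix (Y i j) of truncated
   polynomials without terms below degree lam_j - lam_i, and replacing each X i j by its digits
   turns one into the other so that they agree on the socles and on the tops. As p and T act
   nilpotently, injectivity of either matrix is detected on the socles. *)

section \<open>Isomorphism classes as a quotient\<close>

lemma struct_iso_id: "(\<And>x y. x \<in> G \<Longrightarrow> y \<in> G \<Longrightarrow> m x y = m' x y) \<Longrightarrow> struct_iso G add Ops m m' id"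
  by (simp add: struct_iso_def)

lemma struct_iso_comp:
  "struct_iso G add Ops m1 m2 f \<Longrightarrow> struct_iso G add Ops m2 m3 g \<Longrightarrow> struct_iso G add Ops m1 m3 (g \<circ> f)"
  unfolding struct_iso_def by (auto intro: bij_betw_trans simp: bij_betw_apply)

lemma struct_iso_inv:
  assumes f: "struct_iso G add Ops m1 m2 f"
    and add: "\<And>x y. x \<in> G \<Longrightarrow> y \<in> G \<Longrightarrow> add x y \<in> G"
    and ops: "\<And>\<phi> x. \<phi> \<in> Ops \<Longrightarrow> x \<in> G \<Longrightarrow> \<phi> x \<in> G"
    and m1: "\<And>x y. x \<in> G \<Longrightarrow> y \<in> G \<Longrightarrow> m1 x y \<in> G"
  shows "struct_iso G add Ops m2 m1 (inv_into G f)"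
proof -
  have bij: "bij_betw f G G" and hom: "\<forall>x\<in>G. \<forall>y\<in>G. f (add x y) = add (f x) (f y)"
    and lin: "\<forall>\<phi>\<in>Ops. \<forall>x\<in>G. f (\<phi> x) = \<phi> (f x)" and mult: "\<forall>x\<in>G. \<forall>y\<in>G. f (m1 x y) = m2 (f x) (f y)"
    using f by (auto simp: struct_iso_def)
  let ?g = "inv_into G f"
  have g: "?g x \<in> G" "f (?g x) = x" if "x \<in> G" for x
    using that bij by (auto intro: bij_betw_apply[OF bij_betw_inv_into] bij_betw_inv_into_right)
  have g_f: "?g (f x) = x" if "x \<in> G" for x
    using that bij by (simp add: bij_betw_inv_into_left)
  show ?thesis
    unfolding struct_iso_def
  proof (intro conjI ballI)
    show "bij_betw ?g G G" using bij by (rule bij_betw_inv_into)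
    fix x y assume xy: "x \<in> G" "y \<in> G"
    have "add x y = f (add (?g x) (?g y))" and "m2 x y = f (m1 (?g x) (?g y))"
      using xy g hom mult by simp_all
    then show "?g (add x y) = add (?g x) (?g y)" and "?g (m2 x y) = m1 (?g x) (?g y)"
      using xy g g_f add m1 by simp_all
  next
    fix \<phi> x assume \<phi>: "\<phi> \<in> Ops" "x \<in> G"
    have "\<phi> x = f (\<phi> (?g x))" using \<phi> g lin by simp
    then show "?g (\<phi> x) = \<phi> (?g x)" using \<phi> g g_f ops by simp
  qed
qed

definition iso_rel :: "('a \<Rightarrow> 'a \<Rightarrow> 'a) set \<Rightarrow> 'a set \<Rightarrow> ('a \<Rightarrow> 'a \<Rightarrow> 'a) \<Rightarrow> ('a \<Rightarrow> 'a) set \<Rightarrow>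
    (('a \<Rightarrow> 'a \<Rightarrow> 'a) \<times> ('a \<Rightarrow> 'a \<Rightarrow> 'a)) set" where
  "iso_rel S G add Ops = {(m, m'). m \<in> S \<and> m' \<in> S \<and> (\<exists>f. struct_iso G add Ops m m' f)}"

lemma iso_classes_eq_quotient: "iso_classes S G add Ops = S // iso_rel S G add Ops"
  by (auto simp: iso_classes_def iso_rel_def quotient_def)

lemma equiv_iso_rel:
  assumes add: "\<And>x y. x \<in> G \<Longrightarrow> y \<in> G \<Longrightarrow> add x y \<in> G"
    and ops: "\<And>\<phi> x. \<phi> \<in> Ops \<Longrightarrow> x \<in> G \<Longrightarrow> \<phi> x \<in> G"
    and closed: "\<And>m x y. m \<in> S \<Longrightarrow> x \<in> G \<Longrightarrow> y \<in> G \<Longrightarrow> m x y \<in> G"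
  shows "equiv S (iso_rel S G add Ops)"
proof (rule equivI)
  show "refl_on S (iso_rel S G add Ops)"
    unfolding refl_on_def iso_rel_def using struct_iso_id[of G m m add Ops for m] by blast
  show "sym (iso_rel S G add Ops)"
  proof (rule symI)
    fix m m' assume "(m, m') \<in> iso_rel S G add Ops"
    then obtain f where m: "m \<in> S" "m' \<in> S" and f: "struct_iso G add Ops m m' f"
      by (auto simp: iso_rel_def)
    show "(m', m) \<in> iso_rel S G add Ops"
      using m struct_iso_inv[OF f] add ops closed[OF m(1)] by (auto simp: iso_rel_def)
  qed
  show "trans (iso_rel S G add Ops)"
    unfolding trans_def iso_rel_def using struct_iso_comp by blast
  show "iso_rel S G add Ops \<subseteq> S \<times> S" by (auto simp: iso_rel_def)
qed

lemma quotient_map_class: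
  assumes "equiv A r" "equiv B s" "a \<in> A" "\<And>x y. (x, y) \<in> r \<Longrightarrow> (f x, f y) \<in> s"
  shows "s `` f ` (r `` {a}) = s `` {f a}"
proof
  show "s `` f ` (r `` {a}) \<subseteq> s `` {f a}"
    using assms(2,4) by (auto elim!: equivE dest: transD)
  show "s `` {f a} \<subseteq> s `` f ` (r `` {a})"
    using assms(1,3) equiv_class_self by fastforce
qed

lemma bij_betw_quotient_map:
  assumes r: "equiv A r" and s: "equiv B s" and f: "f ` A \<subseteq> B"
    and f_rel: "\<And>x y. x \<in> A \<Longrightarrow> y \<in> A \<Longrightarrow> (f x, f y) \<in> s \<longleftrightarrow> (x, y) \<in> r"
    and f_onto: "\<And>b. b \<in> B \<Longrightarrow> \<exists>a\<in>A. (f a, b) \<in> s"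
  shows "bij_betw (\<lambda>X. s `` f ` X) (A // r) (B // s)"
proof -
  have r_rel: "(f x, f y) \<in> s" if "(x, y) \<in> r" for x y
    using that f_rel r by (auto dest: equiv_class_eq_iff[THEN iffD1])
  have cls: "s `` f ` (r `` {a}) = s `` {f a}" if "a \<in> A" for a
    by (rule quotient_map_class[OF r s that r_rel])
  show ?thesis
    unfolding bij_betw_def
  proof
    show "inj_on (\<lambda>X. s `` f ` X) (A // r)"
    proof (rule inj_onI)
      fix X Y assume "X \<in> A // r" "Y \<in> A // r" and eq: "s `` f ` X = s `` f ` Y"
      then obtain x y where xy: "x \<in> A" "y \<in> A" "X = r `` {x}" "Y = r `` {y}"
        by (auto elim!: quotientE)
      then have "f x \<in> B" "f y \<in> B" using f by auto
      then show "X = Y"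
        using eq xy cls f_rel eq_equiv_class_iff[OF r] eq_equiv_class_iff[OF s] by auto
    qed
    show "(\<lambda>X. s `` f ` X) ` (A // r) = B // s"
    proof (intro equalityI subsetI)
      fix Y assume "Y \<in> (\<lambda>X. s `` f ` X) ` (A // r)"
      then show "Y \<in> B // s" using cls f by (auto simp: image_subset_iff intro!: quotientI elim!: quotientE)
    next
      fix Y assume "Y \<in> B // s"
      then obtain b where b: "b \<in> B" "Y = s `` {b}" by (auto elim: quotientE)
      then obtain a where a: "a \<in> A" "(f a, b) \<in> s" using f_onto by blast
      then have "Y = s `` f ` (r `` {a})" using b cls equiv_class_eq[OF s] by simp
      then show "Y \<in> (\<lambda>X. s `` f ` X) ` (A // r)" using a by (auto intro: quotientI)
    qed
  qed
qed

lemma image_quotient_map_classes_with: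
  assumes r: "equiv A r" and s: "equiv B s" and f: "f ` A \<subseteq> B"
    and r_rel: "\<And>x y. (x, y) \<in> r \<Longrightarrow> (f x, f y) \<in> s"
    and P_Q: "\<And>a. a \<in> A \<Longrightarrow> P a \<Longrightarrow> Q (f a)"
    and Q_P: "\<And>b. b \<in> B \<Longrightarrow> Q b \<Longrightarrow> \<exists>a\<in>A. P a \<and> (f a, b) \<in> s"
  shows "(\<lambda>X. s `` f ` X) ` {X \<in> A // r. \<exists>a\<in>X. P a} = {Y \<in> B // s. \<exists>b\<in>Y. Q b}"
proof (intro equalityI subsetI)
  fix Y assume "Y \<in> (\<lambda>X. s `` f ` X) ` {X \<in> A // r. \<exists>a\<in>X. P a}"
  then obtain x a where x: "x \<in> A" "(x, a) \<in> r" "P a" "Y = s `` f ` (r `` {x})"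
    by (auto elim!: quotientE)
  then have a: "a \<in> A" and "r `` {x} = r `` {a}"
    using r equiv_class_eq[OF r x(2)] by (auto simp: equiv_def)
  then have "Y = s `` {f a}" using x quotient_map_class[OF r s _ r_rel] by simp
  moreover have "f a \<in> B" using a f by auto
  ultimately show "Y \<in> {Y \<in> B // s. \<exists>b\<in>Y. Q b}"
    using P_Q[OF a x(3)] equiv_class_self[OF s] by (auto intro: quotientI)
next
  fix Y assume "Y \<in> {Y \<in> B // s. \<exists>b\<in>Y. Q b}"
  then obtain y b where y: "y \<in> B" "(y, b) \<in> s" "Q b" "Y = s `` {y}"
    by (auto elim!: quotientE)
  then have b: "b \<in> B" and "s `` {y} = s `` {b}"
    using s equiv_class_eq[OF s y(2)] by (auto simp: equiv_def)
  moreover obtain a where a: "a \<in> A" "P a" "(f a, b) \<in> s" using Q_P[OF b y(3)] by blast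
  ultimately have "Y = s `` f ` (r `` {a})"
    using y quotient_map_class[OF r s a(1) r_rel] equiv_class_eq[OF s a(3)] by simp
  then show "Y \<in> (\<lambda>X. s `` f ` X) ` {X \<in> A // r. \<exists>a\<in>X. P a}"
    using a equiv_class_self[OF r a(1)] by (auto intro!: quotientI)
qed

lemma quotient_map_invariant:
  assumes r: "equiv A r" and s: "equiv B s"
    and P: "\<And>x y. (x, y) \<in> r \<Longrightarrow> P x \<longleftrightarrow> P y"
    and Q: "\<And>x y. (x, y) \<in> s \<Longrightarrow> Q x \<longleftrightarrow> Q y"
    and f: "\<And>a. a \<in> A \<Longrightarrow> P a \<longleftrightarrow> Q (f a)"
  shows "\<forall>X\<in>A // r. \<forall>a\<in>X. \<forall>b\<in>s `` f ` X. P a \<longleftrightarrow> Q b"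
proof (intro ballI)
  fix X a b assume "X \<in> A // r" "a \<in> X" "b \<in> s `` f ` X"
  then obtain x a' where "(x, a) \<in> r" "(x, a') \<in> r" "(f a', b) \<in> s"
    by (auto elim!: quotientE)
  moreover have "a' \<in> A" using \<open>(x, a') \<in> r\<close> r by (auto simp: equiv_def)
  ultimately show "P a \<longleftrightarrow> Q b"
    using P Q f by metis
qed

section \<open>Transport of the lower central series and of the Jacobi identity\<close>

lemma prod_span_subset:
  assumes "zero \<in> P" "\<And>a b. a \<in> P \<Longrightarrow> b \<in> P \<Longrightarrow> add a b \<in> P" "\<And>a. a \<in> P \<Longrightarrow> neg a \<in> P"
    "\<And>\<phi> a. \<phi> \<in> Ops \<Longrightarrow> a \<in> P \<Longrightarrow> \<phi> a \<in> P" "\<And>x y. x \<in> S \<Longrightarrow> y \<in> G \<Longrightarrow> m x y \<in> P"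
  shows "prod_span G add zero neg Ops m S \<subseteq> P"
proof
  fix a assume "a \<in> prod_span G add zero neg Ops m S"
  then show "a \<in> P" by induction (use assms in auto)
qed

lemma prod_span_nsmul:
  "z \<in> prod_span G add zero neg Ops m S \<Longrightarrow> nsmul add zero k z \<in> prod_span G add zero neg Ops m S"
  by (induction k) (auto intro: prod_span.intros)

(* The scalar operations need not be preserved by h, only mapped into the target span: on the
   socles, the action of c on V corresponds to a multiple in U. *)
lemma image_prod_span_subset:
  assumes P: "zero1 \<in> P" "\<And>a b. a \<in> P \<Longrightarrow> b \<in> P \<Longrightarrow> add1 a b \<in> P" "\<And>a. a \<in> P \<Longrightarrow> neg1 a \<in> P"
    "\<And>\<phi> a. \<phi> \<in> Ops1 \<Longrightarrow> a \<in> P \<Longrightarrow> \<phi> a \<in> P" "\<And>x y. x \<in> S \<Longrightarrow> y \<in> G1 \<Longrightarrow> m1 x y \<in> P"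
  and h0: "h zero1 = zero2"
  and hadd: "\<And>a b. a \<in> P \<Longrightarrow> b \<in> P \<Longrightarrow> h (add1 a b) = add2 (h a) (h b)"
  and hneg: "\<And>a. a \<in> P \<Longrightarrow> h (neg1 a) = neg2 (h a)"
  and hops: "\<And>\<phi> a. \<phi> \<in> Ops1 \<Longrightarrow> a \<in> P \<Longrightarrow> h a \<in> prod_span G2 add2 zero2 neg2 Ops2 m2 (h ` S) \<Longrightarrow>
                h (\<phi> a) \<in> prod_span G2 add2 zero2 neg2 Ops2 m2 (h ` S)"
  and hm: "\<And>x y. x \<in> S \<Longrightarrow> y \<in> G1 \<Longrightarrow> h (m1 x y) = m2 (h x) (h y)"
  and hG: "\<And>y. y \<in> G1 \<Longrightarrow> h y \<in> G2"
  shows "h ` prod_span G1 add1 zero1 neg1 Ops1 m1 S \<subseteq> prod_span G2 add2 zero2 neg2 Ops2 m2 (h ` S)"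
proof -
  have "a \<in> P \<and> h a \<in> prod_span G2 add2 zero2 neg2 Ops2 m2 (h ` S)"
    if "a \<in> prod_span G1 add1 zero1 neg1 Ops1 m1 S" for a
    using that
  proof induction
    case zero show ?case using P(1) h0 by (simp add: prod_span.zero)
  next
    case (prod x y) then show ?case using P(5) hm hG by (metis imageI prod_span.prod)
  next
    case (add a b) then show ?case using P(2) hadd by (simp add: prod_span.add)
  next
    case (neg a) then show ?case using P(3) hneg by (simp add: prod_span.neg)
  next
    case (op \<phi> a) then show ?case using P(4) hops by blast
  qed
  then show ?thesis by blast
qed

lemma image_prod_span_eq:
  assumes S: "S \<subseteq> G1" and inv: "\<And>x. x \<in> G1 \<Longrightarrow> h' (h x) = x" "\<And>y. y \<in> G2 \<Longrightarrow> h (h' y) = y"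
    and h: "h ` prod_span G1 add1 zero1 neg1 Ops1 m1 S \<subseteq> prod_span G2 add2 zero2 neg2 Ops2 m2 (h ` S)"
    and h': "h' ` prod_span G2 add2 zero2 neg2 Ops2 m2 (h ` S) \<subseteq> prod_span G1 add1 zero1 neg1 Ops1 m1 (h' ` h ` S)"
    and closed: "prod_span G2 add2 zero2 neg2 Ops2 m2 (h ` S) \<subseteq> G2"
  shows "h ` prod_span G1 add1 zero1 neg1 Ops1 m1 S = prod_span G2 add2 zero2 neg2 Ops2 m2 (h ` S)"
proof -
  have "h' ` h ` S = S" using S inv(1) by (force simp: image_image)
  then have span_h': "h' ` prod_span G2 add2 zero2 neg2 Ops2 m2 (h ` S) \<subseteq> prod_span G1 add1 zero1 neg1 Ops1 m1 S"
    using h' by simp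
  show ?thesis
  proof
    show "prod_span G2 add2 zero2 neg2 Ops2 m2 (h ` S) \<subseteq> h ` prod_span G1 add1 zero1 neg1 Ops1 m1 S"
    proof
      fix y assume y: "y \<in> prod_span G2 add2 zero2 neg2 Ops2 m2 (h ` S)"
      then have "y = h (h' y)" using closed inv(2) by (simp add: subset_iff)
      moreover have "h' y \<in> prod_span G1 add1 zero1 neg1 Ops1 m1 S" using y span_h' by blast
      ultimately show "y \<in> h ` prod_span G1 add1 zero1 neg1 Ops1 m1 S" by (rule image_eqI)
    qed
  qed (rule h)
qed

lemma nilpotent_alg_transfer:
  assumes bij: "bij_betw h G1 G2" and zero: "zero1 \<in> G1" "h zero1 = zero2"
    and closed: "\<And>S. S \<subseteq> G1 \<Longrightarrow> prod_span G1 add1 zero1 neg1 Ops1 m1 S \<subseteq> G1"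
    and span: "\<And>S. S \<subseteq> G1 \<Longrightarrow>
      h ` prod_span G1 add1 zero1 neg1 Ops1 m1 S = prod_span G2 add2 zero2 neg2 Ops2 m2 (h ` S)"
  shows "nilpotent_alg G1 add1 zero1 neg1 Ops1 m1 \<longleftrightarrow> nilpotent_alg G2 add2 zero2 neg2 Ops2 m2"
proof -
  have lcs: "lcs G2 add2 zero2 neg2 Ops2 m2 k = h ` lcs G1 add1 zero1 neg1 Ops1 m1 k
      \<and> lcs G1 add1 zero1 neg1 Ops1 m1 k \<subseteq> G1" for k
  proof (induction k)
    case 0 show ?case using bij by (simp add: bij_betw_def)
  next
    case (Suc k)
    then have "lcs G1 add1 zero1 neg1 Ops1 m1 k \<subseteq> G1" by blast
    then show ?case using Suc.IH closed span by (metis lcs.simps(2))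
  qed
  have "h ` A = {zero2} \<longleftrightarrow> A = {zero1}" if "A \<subseteq> G1" for A
  proof
    assume hA: "h ` A = {zero2}"
    have "x = zero1" if "x \<in> A" for x
      using hA that \<open>A \<subseteq> G1\<close> zero inj_onD[OF bij_betw_imp_inj_on[OF bij]] by (metis imageI singletonD subsetD)
    moreover have "A \<noteq> {}" using hA by auto
    ultimately show "A = {zero1}" by auto
  qed (use zero in simp)
  then show ?thesis using lcs by (simp add: nilpotent_alg_def)
qed
lemma is_lie_transfer:
  assumes lie: "is_lie G1 add1 zero1 m1"
    and h'_in: "\<And>x. x \<in> G2 \<Longrightarrow> h' x \<in> G1" and h'_h: "\<And>x. x \<in> G1 \<Longrightarrow> h' (h x) = x"
    and m1: "\<And>x y. x \<in> G1 \<Longrightarrow> y \<in> G1 \<Longrightarrow> m1 x y \<in> P" and P: "P \<subseteq> G1"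
    and add1: "\<And>x y. x \<in> P \<Longrightarrow> y \<in> P \<Longrightarrow> add1 x y \<in> P"
    and h_in: "\<And>x. x \<in> P \<Longrightarrow> h x \<in> G2"
    and h_add: "\<And>x y. x \<in> P \<Longrightarrow> y \<in> P \<Longrightarrow> h (add1 x y) = add2 (h x) (h y)"
    and h_zero: "h zero1 = zero2"
    and m2: "\<And>x y. x \<in> G2 \<Longrightarrow> y \<in> G2 \<Longrightarrow> m2 x y = h (m1 (h' x) (h' y))"
  shows "is_lie G2 add2 zero2 m2"
  unfolding is_lie_def
proof (intro conjI ballI)
  fix x assume "x \<in> G2"
  then show "m2 x x = zero2" using lie h'_in m2 h_zero by (simp add: is_lie_def)
next
  have nested: "m2 (m2 x y) z = h (m1 (m1 (h' x) (h' y)) (h' z))" if "x \<in> G2" "y \<in> G2" "z \<in> G2" for x y z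
  proof -
    have "m1 (h' x) (h' y) \<in> P" using that h'_in m1 by simp
    then show ?thesis using that m2 h_in h'_h P by auto
  qed
  fix x y z assume xyz: "x \<in> G2" "y \<in> G2" "z \<in> G2"
  let ?a = "m1 (m1 (h' x) (h' y)) (h' z)" and ?b = "m1 (m1 (h' y) (h' z)) (h' x)"
    and ?c = "m1 (m1 (h' z) (h' x)) (h' y)"
  have abc: "?a \<in> P" "?b \<in> P" "?c \<in> P" using xyz h'_in m1 P by (meson subsetD)+
  have "add2 (add2 (m2 (m2 x y) z) (m2 (m2 y z) x)) (m2 (m2 z x) y) = h (add1 (add1 ?a ?b) ?c)"
    using xyz abc nested add1 h_add by simp
  also have "\<dots> = zero2" using lie xyz h'_in h_zero by (simp add: is_lie_def)
  finally show "add2 (add2 (m2 (m2 x y) z) (m2 (m2 y z) x)) (m2 (m2 z x) y) = zero2" .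
qed

locale abelian_group_on =
  fixes G :: "'a set" and add :: "'a \<Rightarrow> 'a \<Rightarrow> 'a" and zero :: 'a and neg :: "'a \<Rightarrow> 'a"
  assumes add_closed: "x \<in> G \<Longrightarrow> y \<in> G \<Longrightarrow> add x y \<in> G"
    and zero_closed: "zero \<in> G"
    and neg_closed: "x \<in> G \<Longrightarrow> neg x \<in> G"
    and add_assoc: "x \<in> G \<Longrightarrow> y \<in> G \<Longrightarrow> z \<in> G \<Longrightarrow> add (add x y) z = add x (add y z)"
    and add_comm: "x \<in> G \<Longrightarrow> y \<in> G \<Longrightarrow> add x y = add y x"
    and add_zero: "x \<in> G \<Longrightarrow> add x zero = x"
    and add_neg: "x \<in> G \<Longrightarrow> add x (neg x) = zero"
begin

lemma zero_add: "x \<in> G \<Longrightarrow> add zero x = x"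
  using add_comm add_zero zero_closed by simp

lemma add_left_cancel:
  assumes "x \<in> G" "y \<in> G" "z \<in> G" "add x y = add x z"
  shows "y = z"
proof -
  have "add (neg x) (add x y) = add (neg x) (add x z)" using assms(4) by simp
  then show ?thesis
    using assms add_assoc[symmetric] neg_closed add_neg add_comm zero_add by metis
qed

lemma neg_unique: "x \<in> G \<Longrightarrow> y \<in> G \<Longrightarrow> add x y = zero \<Longrightarrow> y = neg x"
  using add_left_cancel add_neg neg_closed by metis

lemma nsmul_closed: "x \<in> G \<Longrightarrow> nsmul add zero k x \<in> G"
  by (induction k) (simp_all add: zero_closed add_closed)

lemma nsmul_zero: "nsmul add zero k zero = zero"
  by (induction k) (simp_all add: zero_closed add_zero)

definition endo :: "('a \<Rightarrow> 'a) \<Rightarrow> bool" where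
  "endo h \<longleftrightarrow> (\<forall>x\<in>G. h x \<in> G) \<and> (\<forall>x\<in>G. \<forall>y\<in>G. h (add x y) = add (h x) (h y))"

lemma endo_closed: "endo h \<Longrightarrow> x \<in> G \<Longrightarrow> h x \<in> G"
  by (simp add: endo_def)

lemma endo_add: "endo h \<Longrightarrow> x \<in> G \<Longrightarrow> y \<in> G \<Longrightarrow> h (add x y) = add (h x) (h y)"
  by (simp add: endo_def)

lemma endo_zero: "endo h \<Longrightarrow> h zero = zero"
  using add_left_cancel[of "h zero" "h zero" zero] endo_add[of h zero zero]
  by (simp add: endo_closed zero_closed add_zero)

lemma endo_neg: "endo h \<Longrightarrow> x \<in> G \<Longrightarrow> h (neg x) = neg (h x)"
  using endo_add[of h x "neg x"] by (intro neg_unique) (simp_all add: endo_closed neg_closed add_neg endo_zero)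

lemma endo_nsmul: "endo h \<Longrightarrow> x \<in> G \<Longrightarrow> h (nsmul add zero k x) = nsmul add zero k (h x)"
  by (induction k) (simp_all add: endo_zero endo_add nsmul_closed)

lemma inj_on_endo_iff:
  assumes "endo h"
  shows "inj_on h G \<longleftrightarrow> (\<forall>x\<in>G. h x = zero \<longrightarrow> x = zero)"
proof
  assume "inj_on h G" then show "\<forall>x\<in>G. h x = zero \<longrightarrow> x = zero"
    using assms endo_zero zero_closed by (metis inj_onD)
next
  assume ker: "\<forall>x\<in>G. h x = zero \<longrightarrow> x = zero"
  show "inj_on h G"
  proof (rule inj_onI)
    fix x y assume xy: "x \<in> G" "y \<in> G" "h x = h y"
    then have "h (add x (neg y)) = zero"
      using assms by (simp add: endo_add endo_neg neg_closed add_neg endo_closed)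
    then have "add x (neg y) = zero" using ker xy by (simp add: add_closed neg_closed)
    then have "neg y = neg x" using neg_unique xy by (simp add: neg_closed)
    then show "x = y"
      using xy neg_unique[of "neg x" x] neg_unique[of "neg y" y] add_neg add_comm neg_closed by metis
  qed
qed

lemma inj_on_endo_if_inj_on_kernel:
  assumes h: "endo h" and \<phi>: "\<And>x. x \<in> G \<Longrightarrow> \<phi> x \<in> G" "\<phi> zero = zero"
    and comm: "\<And>x. x \<in> G \<Longrightarrow> h (\<phi> x) = \<phi> (h x)"
    and nilp: "\<And>x. x \<in> G \<Longrightarrow> (\<phi> ^^ N) x = zero"
    and ker: "\<And>x. x \<in> G \<Longrightarrow> \<phi> x = zero \<Longrightarrow> h x = zero \<Longrightarrow> x = zero"
  shows "inj_on h G"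
proof -
  have "\<forall>x\<in>G. (\<phi> ^^ k) x = zero \<longrightarrow> h x = zero \<longrightarrow> x = zero" for k
  proof (induction k)
    case (Suc k)
    show ?case
    proof (intro ballI impI)
      fix x assume x: "x \<in> G" and "(\<phi> ^^ Suc k) x = zero" and hx: "h x = zero"
      then have "(\<phi> ^^ k) (\<phi> x) = zero" by (simp add: funpow_Suc_right del: funpow.simps)
      moreover have "h (\<phi> x) = zero" using comm x hx \<phi> by simp
      ultimately have "\<phi> x = zero" using Suc.IH x \<phi> by simp
      then show "x = zero" using ker x hx by simp
    qed
  qed simp
  then show ?thesis using nilp inj_on_endo_iff[OF h] by blast
qed

lemma biadditive_add_kernel:
  assumes m: "biadditive G add m" and xy: "x \<in> G" "y \<in> G" and uv: "u \<in> G" "v \<in> G"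
    and u: "\<And>z. z \<in> G \<Longrightarrow> m u z = zero" and v: "\<And>z. z \<in> G \<Longrightarrow> m z v = zero"
  shows "m (add x u) (add y v) = m x y"
proof -
  have "m (add x u) (add y v) = add (add (m x y) (m u y)) (add (m x v) (m u v))"
    using m xy uv by (simp add: biadditive_def add_closed)
  then show ?thesis using m xy uv u v by (simp add: add_zero biadditive_def zero_closed)
qed

end

locale module_on = abelian_group_on +
  fixes Ops :: "('a \<Rightarrow> 'a) set"
  assumes ops_closed: "\<phi> \<in> Ops \<Longrightarrow> x \<in> G \<Longrightarrow> \<phi> x \<in> G"
begin

lemma prod_span_closed:
  "S \<subseteq> G \<Longrightarrow> (\<And>x y. x \<in> G \<Longrightarrow> y \<in> G \<Longrightarrow> m x y \<in> G) \<Longrightarrow> prod_span G add zero neg Ops m S \<subseteq> G"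
  by (rule prod_span_subset) (auto simp: zero_closed add_closed neg_closed ops_closed)

lemma struct_iso_endo: "struct_iso G add Ops m1 m2 f \<Longrightarrow> endo f"
  by (auto simp: struct_iso_def endo_def intro: bij_betw_apply)

lemma struct_iso_cong:
  assumes "\<And>x. x \<in> G \<Longrightarrow> f x = f' x" and "\<And>x y. x \<in> G \<Longrightarrow> y \<in> G \<Longrightarrow> m1 x y \<in> G"
  shows "struct_iso G add Ops m1 m2 f \<longleftrightarrow> struct_iso G add Ops m1 m2 f'"
  using assms bij_betw_cong[of G f f' G] by (simp add: struct_iso_def add_closed ops_closed)

lemma equiv_iso_rel_on:
  "(\<And>m x y. m \<in> S \<Longrightarrow> x \<in> G \<Longrightarrow> y \<in> G \<Longrightarrow> m x y \<in> G) \<Longrightarrow> equiv S (iso_rel S G add Ops)"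
  by (rule equiv_iso_rel) (simp_all add: add_closed ops_closed)

lemma struct_iso_image_prod_span:
  assumes f: "struct_iso G add Ops m1 m2 f" and m1: "\<And>x y. x \<in> G \<Longrightarrow> y \<in> G \<Longrightarrow> m1 x y \<in> G"
    and S: "S \<subseteq> G"
  shows "f ` prod_span G add zero neg Ops m1 S \<subseteq> prod_span G add zero neg Ops m2 (f ` S)"
proof (rule image_prod_span_subset[where P = G])
  have f_endo: "endo f" using f by (rule struct_iso_endo)
  then show "f zero = zero" by (rule endo_zero)
  show "f (neg a) = neg (f a)" if "a \<in> G" for a using f_endo that by (rule endo_neg)
  show "f (add a b) = add (f a) (f b)" if "a \<in> G" "b \<in> G" for a b
    using f_endo that by (rule endo_add)
  show "f y \<in> G" if "y \<in> G" for y using f_endo that by (rule endo_closed)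
  show "f (\<phi> a) \<in> prod_span G add zero neg Ops m2 (f ` S)"
    if "\<phi> \<in> Ops" "a \<in> G" "f a \<in> prod_span G add zero neg Ops m2 (f ` S)" for \<phi> a
    using that f by (simp add: struct_iso_def prod_span.op)
  show "f (m1 x y) = m2 (f x) (f y)" if "x \<in> S" "y \<in> G" for x y
    using that f S by (auto simp: struct_iso_def)
qed (use S m1 in \<open>auto simp: zero_closed add_closed neg_closed ops_closed\<close>)

lemma struct_iso_nilpotent:
  assumes f: "struct_iso G add Ops m1 m2 f"
    and m1: "\<And>x y. x \<in> G \<Longrightarrow> y \<in> G \<Longrightarrow> m1 x y \<in> G"
    and m2: "\<And>x y. x \<in> G \<Longrightarrow> y \<in> G \<Longrightarrow> m2 x y \<in> G"
  shows "nilpotent_alg G add zero neg Ops m1 \<longleftrightarrow> nilpotent_alg G add zero neg Ops m2"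
proof (rule nilpotent_alg_transfer)
  have bij: "bij_betw f G G" using f by (simp add: struct_iso_def)
  then show "bij_betw f G G" .
  show "zero \<in> G" by (rule zero_closed)
  show "f zero = zero" using f by (intro endo_zero struct_iso_endo)
  show "prod_span G add zero neg Ops m1 S \<subseteq> G" if "S \<subseteq> G" for S
    using that m1 by (rule prod_span_closed)
  have g: "struct_iso G add Ops m2 m1 (inv_into G f)"
    using f by (rule struct_iso_inv) (simp_all add: add_closed ops_closed m1)
  show "f ` prod_span G add zero neg Ops m1 S = prod_span G add zero neg Ops m2 (f ` S)" if "S \<subseteq> G" for S
  proof (rule image_prod_span_eq[OF that])
    show "inv_into G f (f x) = x" if "x \<in> G" for x using bij that by (simp add: bij_betw_inv_into_left)
    show "f (inv_into G f y) = y" if "y \<in> G" for y using bij that by (simp add: bij_betw_inv_into_right)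
    show "f ` prod_span G add zero neg Ops m1 S \<subseteq> prod_span G add zero neg Ops m2 (f ` S)"
      using f m1 that by (rule struct_iso_image_prod_span)
    show "inv_into G f ` prod_span G add zero neg Ops m2 (f ` S)
        \<subseteq> prod_span G add zero neg Ops m1 (inv_into G f ` f ` S)"
      using g m2 by (rule struct_iso_image_prod_span) (use that bij in \<open>auto simp: bij_betw_apply\<close>)
    show "prod_span G add zero neg Ops m2 (f ` S) \<subseteq> G"
      using that bij m2 by (intro prod_span_closed) (auto simp: bij_betw_apply)
  qed
qed

end

lemma digit_sum_bounds:
  fixes b :: int
  assumes "\<And>j. j < k \<Longrightarrow> 0 \<le> d j \<and> d j < b"
  shows "0 \<le> (\<Sum>j<k. d j * b ^ j) \<and> (\<Sum>j<k. d j * b ^ j) < b ^ k"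
  using assms
proof (induction k)
  case (Suc k)
  then have IH: "0 \<le> (\<Sum>j<k. d j * b ^ j)" "(\<Sum>j<k. d j * b ^ j) < b ^ k"
    and dk: "0 \<le> d k" "d k \<le> b - 1" by auto
  then have "0 < b" by linarith
  then have "d k * b ^ k \<le> (b - 1) * b ^ k" using dk by (intro mult_right_mono) auto
  then have "(\<Sum>j<k. d j * b ^ j) + d k * b ^ k < b ^ k + (b - 1) * b ^ k" using IH by linarith
  also have "\<dots> = b ^ Suc k" by (simp add: algebra_simps)
  finally show ?case using IH dk \<open>0 < b\<close> by simp
qed simp

lemma digit_sum_digits:
  fixes a b :: int
  assumes "0 < b"
  shows "(\<Sum>j<k. (a div b ^ j) mod b * b ^ j) = a mod b ^ k"
proof (induction k)
  case (Suc k)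
  have "a mod (b ^ k * b) = b ^ k * (a div b ^ k mod b) + a mod b ^ k"
    by (rule zmod_zmult2_eq) (use assms in simp)
  then show ?case using Suc by (simp add: algebra_simps)
qed simp

lemma digit_of_digit_sum:
  fixes b :: int
  assumes "\<And>j. j < k \<Longrightarrow> 0 \<le> d j \<and> d j < b" and "l < k"
  shows "((\<Sum>j<k. d j * b ^ j) div b ^ l) mod b = d l"
  using assms
proof (induction k)
  case (Suc k)
  have b: "0 \<le> (\<Sum>j<k. d j * b ^ j)" "(\<Sum>j<k. d j * b ^ j) < b ^ k"
    using digit_sum_bounds[of k d b] Suc.prems by auto
  have "0 < b" using Suc.prems(1)[of 0] by simp
  show ?case
  proof (cases "l < k")
    case True
    have "b ^ k = b ^ l * b ^ (k - l)" using True by (simp add: power_add[symmetric])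
    then have "(\<Sum>j<Suc k. d j * b ^ j) = (\<Sum>j<k. d j * b ^ j) + (d k * b ^ (k - l)) * b ^ l"
      by simp
    then have "(\<Sum>j<Suc k. d j * b ^ j) div b ^ l = (\<Sum>j<k. d j * b ^ j) div b ^ l + d k * b ^ (k - l)"
      using \<open>0 < b\<close> by (simp only: div_mult_self1 power_not_zero) simp
    moreover have "b dvd b ^ (k - l)" using True by simp
    ultimately show ?thesis using Suc True by (simp add: mod_add_right_eq[symmetric])
  next
    case False
    then have "l = k" using Suc.prems by simp
    moreover have "(\<Sum>j<Suc k. d j * b ^ j) div b ^ k = d k"
      using b \<open>0 < b\<close> by (simp add: div_add1_eq div_pos_pos_trivial)
    ultimately show ?thesis using Suc.prems(1)[of k] by simp
  qed
qed simp

lemma power_dvd_mult_power_iff: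
  fixes b X :: int
  assumes "b \<noteq> 0"
  shows "b ^ k dvd b ^ j * X \<longleftrightarrow> b ^ (k - j) dvd X"
proof (cases "k \<le> j")
  case True
  then show ?thesis by (simp add: dvd_mult2 le_imp_power_dvd)
next
  case False
  then have "b ^ k = b ^ j * b ^ (k - j)" by (simp add: power_add[symmetric])
  then show ?thesis using assms by simp
qed

lemma mod_power_mult_left:
  fixes b X y :: int
  assumes "b \<noteq> 0" "b ^ (k - j) dvd X"
  shows "((y mod b ^ j) * X) mod b ^ k = (y * X) mod b ^ k"
proof -
  have "b ^ k dvd b ^ j * X" using assms by (simp add: power_dvd_mult_power_iff)
  moreover have "(y mod b ^ j) * X - y * X = - (y div b ^ j) * (b ^ j * X)"
    by (simp add: minus_div_mult_eq_mod[symmetric] algebra_simps)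
  ultimately show ?thesis by (simp add: mod_eq_dvd_iff)
qed

lemma sum_mod_cong: "(\<And>i. i \<in> I \<Longrightarrow> A i mod (q::int) = B i mod q) \<Longrightarrow> (\<Sum>i\<in>I. A i) mod q = (\<Sum>i\<in>I. B i) mod q"
  by (metis (mono_tags, lifting) mod_sum_eq sum.cong)

definition conv :: "(nat \<Rightarrow> int) \<Rightarrow> (nat \<Rightarrow> int) \<Rightarrow> nat \<Rightarrow> int" where
  "conv a b l = (\<Sum>s=0..l. a s * b (l - s))"

lemma conv_0: "conv a b 0 = a 0 * b 0"
  by (simp add: conv_def)

lemma conv_eq_fps_nth: "conv a b l = fps_nth (Abs_fps a * Abs_fps b) l"
  by (simp add: conv_def fps_mult_nth)

lemma conv_assoc: "conv (conv a b) d l = conv a (conv b d) l"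
proof -
  have "Abs_fps (conv a b) = Abs_fps a * Abs_fps b" "Abs_fps (conv b d) = Abs_fps b * Abs_fps d"
    by (simp_all add: conv_eq_fps_nth[abs_def] fps_nth_inverse)
  then show ?thesis by (simp add: conv_eq_fps_nth mult.assoc)
qed

lemma conv_add_left: "conv (\<lambda>s. a s + b s) d l = conv a d l + conv b d l"
  by (simp add: conv_def sum.distrib algebra_simps)

lemma conv_sum_right: "conv a (\<lambda>s. \<Sum>i\<in>I. b i s) l = (\<Sum>i\<in>I. conv a (b i) l)"
  by (simp add: conv_def sum_distrib_left sum.swap[of _ I])

lemma conv_cong_right: "(\<And>s. s \<le> l \<Longrightarrow> b s = b' s) \<Longrightarrow> conv a b l = conv a b' l"
  unfolding conv_def by (rule sum.cong) auto

lemma conv_mod_left: "conv (\<lambda>s. a s mod q) b l mod q = conv a b l mod (q::int)"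
proof -
  have "conv (\<lambda>s. a s mod q) b l mod q = (\<Sum>s=0..l. (a s mod q * b (l - s)) mod q) mod q"
    by (simp add: conv_def mod_sum_eq)
  also have "\<dots> = (\<Sum>s=0..l. (a s * b (l - s)) mod q) mod q" by (simp add: mod_mult_left_eq)
  finally show ?thesis by (simp add: conv_def mod_sum_eq)
qed

lemma conv_mod_right: "conv a (\<lambda>s. b s mod q) l mod q = conv a b l mod (q::int)"
proof -
  have "conv a (\<lambda>s. b s mod q) l mod q = (\<Sum>s=0..l. (a s * (b (l - s) mod q)) mod q) mod q"
    by (simp add: conv_def mod_sum_eq)
  also have "\<dots> = (\<Sum>s=0..l. (a s * b (l - s)) mod q) mod q" by (simp add: mod_mult_right_eq)
  finally show ?thesis by (simp add: conv_def mod_sum_eq)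
qed

lemma conv_truncate_left:
  assumes "\<And>r. r + M \<le> l \<Longrightarrow> b r = 0"
  shows "conv (\<lambda>s. if s < M then a s else 0) b l = conv a b l"
  unfolding conv_def using assms[of "l - _"] by (intro sum.cong) auto

locale prime_partition =
  fixes p n :: nat and lam :: "nat list"
  assumes prime: "prime p" and partition: "is_partition lam n"
begin

abbreviation "t \<equiv> length lam"
(* Summands are indexed from 0, so L i is the exponent lam_(i+1) of the paper. *)
abbreviation "L i \<equiv> lam ! i"
abbreviation "U \<equiv> U_car p lam"
abbreviation "addU \<equiv> U_add p lam"
abbreviation "negU \<equiv> U_neg p lam"
abbreviation "smulU k x \<equiv> nsmul addU U_zero k x"
abbreviation "V \<equiv> V_car p lam"
abbreviation "addV \<equiv> V_add p lam"
abbreviation "negV \<equiv> V_neg p lam"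
abbreviation "act \<equiv> V_act p lam"
abbreviation "C \<equiv> C_car p n"
abbreviation "T \<equiv> T_el n"
abbreviation "OpsV \<equiv> V_ops p n lam"

lemma p_gt_1: "1 < p"
  using prime prime_gt_1_nat by blast

lemma p_pos [simp]: "0 < p" "p \<noteq> 0" "(0::int) < int p" "int p \<noteq> 0"
  using p_gt_1 by simp_all

lemma L_pos: "i < t \<Longrightarrow> 0 < L i"
  using partition unfolding is_partition_def by (auto dest: nth_mem)

lemma L_le_n: "i < t \<Longrightarrow> L i \<le> n"
  using partition member_le_sum_list[OF nth_mem] unfolding is_partition_def by fastforce

lemma L_eq_1: "n \<le> 1 \<Longrightarrow> i < t \<Longrightarrow> L i = 1"
  using L_pos L_le_n by fastforce

lemma p_power_L: "i < t \<Longrightarrow> int p ^ L i = int p * int p ^ (L i - 1)"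
  using L_pos by (metis Suc_diff_1 power_Suc)

lemma p_dvd_p_power_L: "i < t \<Longrightarrow> int p dvd int p ^ L i"
  using p_power_L by simp

lemma memU: "x \<in> U \<longleftrightarrow> (\<forall>i<t. 0 \<le> x i \<and> x i < int p ^ L i) \<and> (\<forall>i\<ge>t. x i = 0)"
  by (simp add: U_car_def)

lemma memV: "v \<in> V \<longleftrightarrow> (\<forall>i j. i < t \<and> j < L i \<longrightarrow> 0 \<le> v i j \<and> v i j < int p) \<and>
    (\<forall>i j. \<not> (i < t \<and> j < L i) \<longrightarrow> v i j = 0)"
  by (simp add: V_car_def)

lemma addU_apply: "addU x y i = (if i < t then (x i + y i) mod (int p ^ L i) else 0)"
  by (simp add: U_add_def)

lemma negU_apply: "negU x i = (if i < t then (- x i) mod (int p ^ L i) else 0)"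
  by (simp add: U_neg_def)

lemma addV_apply: "addV v w i j = (if i < t \<and> j < L i then (v i j + w i j) mod int p else 0)"
  by (simp add: V_add_def)

lemma negV_apply: "negV v i j = (if i < t \<and> j < L i then (- v i j) mod int p else 0)"
  by (simp add: V_neg_def)

lemma act_apply: "act c v i j = (if i < t \<and> j < L i then conv c (v i) j mod int p else 0)"
  by (simp add: V_act_def conv_def)

lemma U_eqI: "x \<in> U \<Longrightarrow> y \<in> U \<Longrightarrow> (\<And>i. i < t \<Longrightarrow> x i = y i) \<Longrightarrow> x = y"
  by (rule ext) (metis memU not_le)

lemma V_eqI: "v \<in> V \<Longrightarrow> w \<in> V \<Longrightarrow> (\<And>i j. i < t \<Longrightarrow> j < L i \<Longrightarrow> v i j = w i j) \<Longrightarrow> v = w"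
  by (intro ext) (metis memV)

lemma memU_mod: "x \<in> U \<Longrightarrow> i < t \<Longrightarrow> x i mod (int p ^ L i) = x i"
  by (simp add: memU)

lemma memV_mod: "v \<in> V \<Longrightarrow> i < t \<Longrightarrow> j < L i \<Longrightarrow> v i j mod int p = v i j"
  by (simp add: memV)

lemma act_in [simp]: "act c v \<in> V"
  by (simp add: memV act_apply)

lemma addU_assoc: "addU (addU x y) z = addU x (addU y z)"
  by (rule ext) (simp add: addU_apply mod_add_left_eq mod_add_right_eq add.assoc)

lemma addV_assoc: "addV (addV v w) z = addV v (addV w z)"
  by (intro ext) (simp add: addV_apply mod_add_left_eq mod_add_right_eq add.assoc)

lemma addU_neg: "addU x (negU x) = U_zero"
  by (rule ext) (simp add: addU_apply negU_apply U_zero_def mod_add_right_eq)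

lemma addV_neg: "addV v (negV v) = V_zero"
  by (intro ext) (simp add: addV_apply negV_apply V_zero_def mod_add_right_eq)

sublocale U: module_on U addU U_zero negU "{}"
  by unfold_locales (auto intro!: U_eqI simp: memU addU_apply negU_apply U_zero_def add.commute
      addU_assoc addU_neg)

sublocale V: module_on V addV V_zero negV OpsV
proof unfold_locales
  show "\<phi> v \<in> V" if "\<phi> \<in> OpsV" for \<phi> v using that by (auto simp: V_ops_def)
qed (auto intro!: V_eqI simp: memV addV_apply negV_apply V_zero_def add.commute addV_assoc addV_neg)

lemma smulU_apply:
  "x \<in> U \<Longrightarrow> smulU k x = (\<lambda>i. if i < t then (int k * x i) mod (int p ^ L i) else 0)"
  by (induction k) (auto simp: U_zero_def addU_apply mod_add_right_eq algebra_simps)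

lemma addU_mod_p: "i < t \<Longrightarrow> addU x y i mod int p = (x i + y i) mod int p"
  by (simp add: addU_apply mod_mod_cancel p_dvd_p_power_L)

lemma smulU_mod_p: "x \<in> U \<Longrightarrow> i < t \<Longrightarrow> smulU k x i mod int p = (int k * x i) mod int p"
  by (simp add: smulU_apply mod_mod_cancel p_dvd_p_power_L)

lemma smulU_mult:
  assumes "x \<in> U"
  shows "smulU (a * b) x = smulU a (smulU b x)"
proof -
  have bx: "smulU b x \<in> U" using assms by (rule U.nsmul_closed)
  show ?thesis unfolding smulU_apply[OF bx]
    by (simp add: smulU_apply[OF assms] fun_eq_iff mod_mult_right_eq mult.assoc)
qed

lemma C_nonneg: "c \<in> C \<Longrightarrow> 0 \<le> c j"
  by (cases "j < n") (auto simp: C_car_def)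

lemma row_in_C:
  assumes v: "v \<in> V" and i: "i < t"
  shows "v i \<in> C"
proof -
  have "0 \<le> v i j \<and> v i j < int p" for j
    using v i by (cases "j < L i") (auto simp: memV)
  moreover have "v i j = 0" if "n \<le> j" for j using v L_le_n[OF i] that by (simp add: memV)
  ultimately show ?thesis by (simp add: C_car_def)
qed

lemma act_in_OpsV: "c \<in> C \<Longrightarrow> act c \<in> OpsV"
  by (simp add: V_ops_def)

lemma T_in_C: "T \<in> C"
  using p_gt_1 by (auto simp: C_car_def T_el_def)

lemma act_zero: "act c V_zero = V_zero"
  by (simp add: V_act_def V_zero_def fun_eq_iff)

lemma act_T_trivial: "n \<le> 1 \<Longrightarrow> act T v = V_zero"
  by (simp add: V_act_def T_el_def V_zero_def fun_eq_iff)

lemma act_T_apply: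
  assumes "1 < n"
  shows "act T v i j = (if i < t \<and> j < L i \<and> 0 < j then v i (j - 1) mod int p else 0)"
proof -
  have "conv T (v i) j = (\<Sum>k\<in>{0..j}. if k = 1 then v i (j - 1) else 0)"
    using assms unfolding conv_def by (intro sum.cong) (auto simp: T_el_def)
  then show ?thesis by (auto simp: act_apply conv_0 T_el_def)
qed

lemma act_T_power_apply:
  assumes "1 < n" "v \<in> V"
  shows "(act T ^^ k) v i j = (if i < t \<and> j < L i \<and> k \<le> j then v i (j - k) else 0)"
proof (induction k arbitrary: j)
  case 0 then show ?case using assms(2) by (auto simp: memV)
next
  case (Suc k) then show ?case using assms memV_mod[OF assms(2)] by (auto simp: act_T_apply)
qed

lemma act_T_nilpotent:
  assumes v: "v \<in> V"
  shows "(act T ^^ n) v = V_zero"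
proof (cases "1 < n")
  case True
  then show ?thesis
    using v by (auto simp: act_T_power_apply V_zero_def fun_eq_iff dest: L_le_n)
next
  case False
  show ?thesis
  proof (cases "n = 0")
    case True
    then have "v = V_zero" using L_pos L_le_n by (intro V_eqI[OF v V.zero_closed]) fastforce
    then show ?thesis using True by simp
  next
    case n: False
    have "act T v = V_zero" using False by (simp add: act_T_trivial)
    moreover have "n = 1" using False n by simp
    ultimately show ?thesis by simp
  qed
qed

subsection \<open>Socles and base-\<open>p\<close> digits\<close>

(* The kernels of p on U and of T on V (smulU_p_eq_zero_iff, act_T_eq_zero_iff), in coordinates. *)
definition socU :: "(nat \<Rightarrow> int) set" where
  "socU = {x \<in> U. \<forall>i<t. int p ^ (L i - 1) dvd x i}"

definition socV :: "(nat \<Rightarrow> nat \<Rightarrow> int) set" where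
  "socV = {v \<in> V. \<forall>i<t. \<forall>j. j + 1 < L i \<longrightarrow> v i j = 0}"

lemma socU_in_U: "x \<in> socU \<Longrightarrow> x \<in> U"
  by (simp add: socU_def)

lemma socV_in_V: "v \<in> socV \<Longrightarrow> v \<in> V"
  by (simp add: socV_def)

lemma smulU_p_eq_zero_iff:
  assumes "x \<in> U"
  shows "smulU p x = U_zero \<longleftrightarrow> x \<in> socU"
proof -
  have "(int p * x i) mod (int p ^ L i) = 0 \<longleftrightarrow> int p ^ (L i - 1) dvd x i" if "i < t" for i
    using p_power_L[OF that] by (simp add: mod_eq_0_iff_dvd)
  moreover have "smulU p x = U_zero \<longleftrightarrow> (\<forall>i<t. (int p * x i) mod (int p ^ L i) = 0)"
    unfolding smulU_apply[OF assms] by (auto simp: U_zero_def fun_eq_iff)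
  ultimately show ?thesis using assms by (auto simp: socU_def)
qed

lemma act_socV:
  assumes "v \<in> socV"
  shows "act c v = (\<lambda>i j. if i < t \<and> j + 1 = L i then (c 0 * v i j) mod int p else 0)"
proof (intro ext)
  fix i j
  have "conv c (v i) j = (\<Sum>k\<in>{0..j}. if k = 0 then (if j + 1 = L i then c 0 * v i j else 0) else 0)"
    if "i < t" "j < L i"
    unfolding conv_def using assms that by (intro sum.cong) (auto simp: socV_def)
  then show "act c v i j = (if i < t \<and> j + 1 = L i then (c 0 * v i j) mod int p else 0)"
    by (auto simp: act_apply)
qed

lemma act_T_eq_zero_iff:
  assumes v: "v \<in> V"
  shows "act T v = V_zero \<longleftrightarrow> v \<in> socV"
proof
  assume "v \<in> socV"
  then show "act T v = V_zero" by (simp add: act_socV T_el_def V_zero_def fun_eq_iff)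
next
  assume T: "act T v = V_zero"
  show "v \<in> socV"
  proof (cases "1 < n")
    case True
    have "v i j = 0" if "i < t" "j + 1 < L i" for i j
    proof -
      have "act T v i (j + 1) = 0" using T by (simp add: V_zero_def)
      then show ?thesis using that True v by (simp add: act_T_apply memV_mod)
    qed
    then show ?thesis using v by (simp add: socV_def)
  next
    case False
    then show ?thesis using v L_eq_1 by (auto simp: socV_def)
  qed
qed

lemma socU_zero: "U_zero \<in> socU"
  by (simp add: socU_def U_zero_def U.zero_closed[unfolded U_zero_def])

lemma socV_zero: "V_zero \<in> socV"
  by (simp add: socV_def V_zero_def V.zero_closed[unfolded V_zero_def])

lemma socU_add: "x \<in> socU \<Longrightarrow> y \<in> socU \<Longrightarrow> addU x y \<in> socU"
  using p_power_L by (auto simp: socU_def addU_apply U.add_closed intro!: dvd_mod)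

lemma socU_neg: "x \<in> socU \<Longrightarrow> negU x \<in> socU"
  using p_power_L by (auto simp: socU_def negU_apply U.neg_closed intro!: dvd_mod)

lemma socV_add: "v \<in> socV \<Longrightarrow> w \<in> socV \<Longrightarrow> addV v w \<in> socV"
  by (auto simp: socV_def addV_apply V.add_closed)

lemma socV_neg: "v \<in> socV \<Longrightarrow> negV v \<in> socV"
  by (auto simp: socV_def negV_apply V.neg_closed)

lemma socV_act: "v \<in> socV \<Longrightarrow> act c v \<in> socV"
  using act_in[of c v] by (simp add: socV_def act_socV)

definition digits :: "(nat \<Rightarrow> int) \<Rightarrow> nat \<Rightarrow> nat \<Rightarrow> int" where
  "digits x = (\<lambda>i j. if i < t \<and> j < L i then (x i div int p ^ j) mod int p else 0)"

definition undigits :: "(nat \<Rightarrow> nat \<Rightarrow> int) \<Rightarrow> nat \<Rightarrow> int" where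
  "undigits v = (\<lambda>i. if i < t then (\<Sum>j<L i. v i j * int p ^ j) else 0)"

lemma digits_in [simp]: "digits x \<in> V"
  by (simp add: memV digits_def)

lemma undigits_in [simp]: "v \<in> V \<Longrightarrow> undigits v \<in> U"
  using digit_sum_bounds[of "L _" "v _"] by (auto simp: memU memV undigits_def)

lemma undigits_digits [simp]: "x \<in> U \<Longrightarrow> undigits (digits x) = x"
  by (rule U_eqI[OF undigits_in[OF digits_in]]) (auto simp: undigits_def digits_def digit_sum_digits memU_mod)

lemma digits_undigits [simp]: "v \<in> V \<Longrightarrow> digits (undigits v) = v"
  by (rule V_eqI) (auto simp: undigits_def digits_def memV intro!: digit_of_digit_sum)

lemma bij_betw_digits: "bij_betw digits U V"
  by (rule bij_betwI[where g = undigits]) simp_all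

lemma digits_eqI: "x \<in> U \<Longrightarrow> v \<in> V \<Longrightarrow> undigits v = x \<Longrightarrow> digits x = v"
  by auto

lemma digits_zero: "digits U_zero = V_zero"
  by (simp add: digits_def U_zero_def V_zero_def fun_eq_iff)

lemma undigits_zero: "undigits V_zero = U_zero"
  by (simp add: undigits_def U_zero_def V_zero_def fun_eq_iff)

lemma undigits_mod_p:
  assumes "v \<in> V" "i < t"
  shows "undigits v i mod int p = v i 0"
proof -
  have "digits (undigits v) i 0 = v i 0" using assms(1) by simp
  then show ?thesis using L_pos[OF assms(2)] assms(2) by (simp add: digits_def)
qed

lemma socU_digit:
  assumes "z \<in> socU" "i < t"
  shows "z i = (z i div int p ^ (L i - 1)) * int p ^ (L i - 1)"
    and "0 \<le> z i div int p ^ (L i - 1)" "z i div int p ^ (L i - 1) < int p"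
proof -
  have d: "int p ^ (L i - 1) dvd z i" and b: "0 \<le> z i" "z i < int p ^ L i"
    using assms by (auto simp: socU_def memU)
  show e: "z i = (z i div int p ^ (L i - 1)) * int p ^ (L i - 1)" using d by simp
  show "0 \<le> z i div int p ^ (L i - 1)" using b by (simp add: pos_imp_zdiv_nonneg_iff)
  have "(z i div int p ^ (L i - 1)) * int p ^ (L i - 1) < int p * int p ^ (L i - 1)"
    using e b p_power_L[OF assms(2)] by simp
  then show "z i div int p ^ (L i - 1) < int p" by (simp add: mult_less_cancel_right)
qed

lemma digits_socU:
  assumes z: "z \<in> socU" and i: "i < t"
  shows "digits z i j = (if j = L i - 1 then z i div int p ^ (L i - 1) else 0)"
proof -
  define c where "c = z i div int p ^ (L i - 1)"
  have zi: "z i = c * int p ^ (L i - 1)" and c: "0 \<le> c" "c < int p"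
    using socU_digit[OF z i] by (simp_all add: c_def)
  have "(z i div int p ^ j) mod int p = 0" if "j < L i - 1"
  proof -
    have "int p ^ (L i - 1) = int p ^ (L i - 1 - j) * int p ^ j"
      using that by (simp add: power_add[symmetric])
    then have "z i div int p ^ j = c * int p ^ (L i - 1 - j)" by (simp add: zi mult.assoc)
    moreover have "int p dvd int p ^ (L i - 1 - j)" using that by (intro dvd_power) auto
    ultimately show ?thesis by simp
  qed
  then show ?thesis unfolding c_def[symmetric] using zi c i L_pos[OF i] by (auto simp: digits_def)
qed

lemma digits_socU_in:
  assumes "z \<in> socU"
  shows "digits z \<in> socV"
proof -
  have "digits z i j = 0" if "i < t" "j + 1 < L i" for i j
    using digits_socU[OF assms that(1)] that by simp
  then show ?thesis by (simp add: socV_def)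
qed

lemma undigits_socV:
  assumes "v \<in> socV" "i < t"
  shows "undigits v i = v i (L i - 1) * int p ^ (L i - 1)"
proof -
  have "(\<Sum>j<L i. v i j * int p ^ j) = (\<Sum>j\<in>{..<L i}. if j = L i - 1 then v i (L i - 1) * int p ^ (L i - 1) else 0)"
    by (rule sum.cong) (use assms in \<open>auto simp: socV_def\<close>)
  also have "\<dots> = v i (L i - 1) * int p ^ (L i - 1)"
    using L_pos[OF assms(2)] by (subst sum.delta) auto
  finally show ?thesis using assms by (simp add: undigits_def)
qed

lemma undigits_socV_in:
  assumes "v \<in> socV"
  shows "undigits v \<in> socU"
proof -
  have "undigits v \<in> U" using assms socV_in_V by simp
  then show ?thesis using assms by (simp add: socU_def undigits_socV)
qed

lemma mod_p_mult_top_power: "i < t \<Longrightarrow> (a mod int p) * int p ^ (L i - 1) = (a * int p ^ (L i - 1)) mod int p ^ L i"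
  by (simp add: p_power_L mod_mult_mult2)

lemma undigits_add_socV:
  assumes "v \<in> socV" "w \<in> socV"
  shows "undigits (addV v w) = addU (undigits v) (undigits w)"
proof (rule U_eqI)
  fix i assume i: "i < t"
  have "undigits (addV v w) i = ((v i (L i - 1) + w i (L i - 1)) mod int p) * int p ^ (L i - 1)"
    using undigits_socV[OF socV_add[OF assms] i] i L_pos[OF i] by (simp add: addV_apply)
  also have "\<dots> = ((v i (L i - 1) + w i (L i - 1)) * int p ^ (L i - 1)) mod int p ^ L i"
    by (rule mod_p_mult_top_power[OF i])
  also have "\<dots> = addU (undigits v) (undigits w) i"
    using i by (simp add: undigits_socV[OF assms(1) i] undigits_socV[OF assms(2) i] addU_apply distrib_right)
  finally show "undigits (addV v w) i = addU (undigits v) (undigits w) i" .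
qed (use assms socV_in_V socV_add U.add_closed in auto)

lemma undigits_neg_socV:
  assumes "v \<in> socV"
  shows "undigits (negV v) = negU (undigits v)"
proof (rule U_eqI)
  fix i assume i: "i < t"
  have "undigits (negV v) i = ((- v i (L i - 1)) mod int p) * int p ^ (L i - 1)"
    using undigits_socV[OF socV_neg[OF assms] i] i L_pos[OF i] by (simp add: negV_apply)
  also have "\<dots> = ((- v i (L i - 1)) * int p ^ (L i - 1)) mod int p ^ L i"
    by (rule mod_p_mult_top_power[OF i])
  also have "\<dots> = negU (undigits v) i"
    using i by (simp add: undigits_socV[OF assms i] negU_apply)
  finally show "undigits (negV v) i = negU (undigits v) i" .
qed (use assms socV_in_V socV_neg U.neg_closed in auto)

lemma undigits_act_socV:
  assumes "v \<in> socV" "c \<in> C"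
  shows "undigits (act c v) = smulU (nat (c 0)) (undigits v)"
proof (rule U_eqI)
  fix i assume i: "i < t"
  have "undigits (act c v) i = ((c 0 * v i (L i - 1)) mod int p) * int p ^ (L i - 1)"
    using undigits_socV[OF socV_act[OF assms(1)] i] i L_pos[OF i] by (simp add: act_socV[OF assms(1)])
  also have "\<dots> = ((c 0 * v i (L i - 1)) * int p ^ (L i - 1)) mod int p ^ L i"
    by (rule mod_p_mult_top_power[OF i])
  also have "\<dots> = smulU (nat (c 0)) (undigits v) i"
    using i assms socV_in_V C_nonneg[OF assms(2)] by (simp add: undigits_socV smulU_apply mult.assoc)
  finally show "undigits (act c v) i = smulU (nat (c 0)) (undigits v) i" .
qed (use assms socV_in_V U.nsmul_closed in auto)

lemma digits_add_socU: "x \<in> socU \<Longrightarrow> y \<in> socU \<Longrightarrow> digits (addU x y) = addV (digits x) (digits y)"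
  by (intro digits_eqI) (simp_all add: undigits_add_socV digits_socU_in socU_in_U U.add_closed V.add_closed)

lemma digits_neg_socU: "x \<in> socU \<Longrightarrow> digits (negU x) = negV (digits x)"
  by (intro digits_eqI) (simp_all add: undigits_neg_socV digits_socU_in socU_in_U U.neg_closed V.neg_closed)

lemma digits_smul_socU: "x \<in> socU \<Longrightarrow> c \<in> C \<Longrightarrow> digits (smulU (nat (c 0)) x) = act c (digits x)"
  by (intro digits_eqI) (simp_all add: undigits_act_socV digits_socU_in socU_in_U U.nsmul_closed)

subsection \<open>Multiplications and their transport along the digits\<close>

abbreviation "RS \<equiv> ring_structs p lam"
abbreviation "AS \<equiv> alg_structs p n lam"

lemma ring_structs_biadditive: "m \<in> RS \<Longrightarrow> biadditive U addU m"
  by (simp add: ring_structs_def)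

lemma ring_structs_closed: "m \<in> RS \<Longrightarrow> x \<in> U \<Longrightarrow> y \<in> U \<Longrightarrow> m x y \<in> U"
  by (simp add: ring_structs_def biadditive_def)

lemma ring_structs_socU:
  assumes "m \<in> RS" "x \<in> U" "y \<in> U"
  shows "m x y \<in> socU"
  using assms smulU_p_eq_zero_iff[OF ring_structs_closed[OF assms]] by (simp add: ring_structs_def)

lemma alg_structs_biadditive: "a \<in> AS \<Longrightarrow> biadditive V addV a"
  by (simp add: alg_structs_def)

lemma alg_structs_closed: "a \<in> AS \<Longrightarrow> v \<in> V \<Longrightarrow> w \<in> V \<Longrightarrow> a v w \<in> V"
  by (simp add: alg_structs_def biadditive_def)

lemma alg_structs_socV:
  assumes "a \<in> AS" "v \<in> V" "w \<in> V"
  shows "a v w \<in> socV"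
  using assms act_T_eq_zero_iff[OF alg_structs_closed[OF assms]] by (simp add: alg_structs_def)

lemma alg_structs_act:
  "a \<in> AS \<Longrightarrow> c \<in> C \<Longrightarrow> v \<in> V \<Longrightarrow> w \<in> V \<Longrightarrow> a (act c v) w = act c (a v w) \<and> a v (act c w) = act c (a v w)"
  by (simp add: alg_structs_def ops_compatible_def V_ops_def)

lemma U_eq_add_p_multiple:
  assumes "x \<in> U" "x' \<in> U" "\<And>i. i < t \<Longrightarrow> x i mod int p = x' i mod int p"
  obtains u where "u \<in> U" "x' = addU x (smulU p u)"
proof
  define u where "u = (\<lambda>i. if i < t then ((x' i - x i) div int p) mod (int p ^ L i) else 0)"
  show "u \<in> U" by (simp add: u_def memU)
  show "x' = addU x (smulU p u)"
  proof (rule U_eqI)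
    fix i assume i: "i < t"
    have "int p dvd (x' i - x i)" using assms(3)[OF i] by (metis mod_eq_dvd_iff)
    then have "addU x (smulU p u) i = (x i + (x' i - x i)) mod (int p ^ L i)"
      using i \<open>u \<in> U\<close> by (simp add: addU_apply smulU_apply u_def mod_add_right_eq mod_mult_right_eq)
    then show "x' i = addU x (smulU p u) i" using assms(2) i by (simp add: memU_mod)
  qed (use assms \<open>u \<in> U\<close> U.add_closed U.nsmul_closed in auto)
qed

lemma V_eq_add_T_multiple:
  assumes "v \<in> V" "v' \<in> V" "\<And>i. i < t \<Longrightarrow> v i 0 = v' i 0"
  obtains u where "u \<in> V" "v' = addV v (act T u)"
proof (cases "1 < n")
  case True
  define u where "u = (\<lambda>i j. if i < t \<and> j + 1 < L i then (v' i (j + 1) - v i (j + 1)) mod int p else 0)"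
  have "u \<in> V" by (auto simp: u_def memV)
  moreover have "v' = addV v (act T u)"
  proof (rule V_eqI)
    fix i j assume ij: "i < t" "j < L i"
    show "v' i j = addV v (act T u) i j"
    proof (cases "j = 0")
      case True
      then show ?thesis using ij assms \<open>1 < n\<close> by (simp add: addV_apply act_T_apply memV_mod)
    next
      case False
      then have "addV v (act T u) i j = (v i j + (v' i j - v i j)) mod int p"
        using ij \<open>1 < n\<close> by (simp add: addV_apply act_T_apply u_def mod_add_right_eq)
      then show ?thesis using assms(2) ij by (simp add: memV_mod)
    qed
  qed (use assms V.add_closed in auto)
  ultimately show ?thesis using that by blast
next
  case False
  have "v' = v" using assms L_eq_1 False by (intro V_eqI) auto
  then show ?thesis using that[OF V.zero_closed] assms(1) False by (simp add: act_T_trivial V.add_zero)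
qed

lemma ring_structs_cong:
  assumes m: "m \<in> RS" and xy: "x \<in> U" "x' \<in> U" "y \<in> U" "y' \<in> U"
    and "\<And>i. i < t \<Longrightarrow> x i mod int p = x' i mod int p" "\<And>i. i < t \<Longrightarrow> y i mod int p = y' i mod int p"
  shows "m x' y' = m x y"
proof -
  obtain u w where uw: "u \<in> U" "x' = addU x (smulU p u)" "w \<in> U" "y' = addU y (smulU p w)"
    using U_eq_add_p_multiple assms by metis
  have kill: "smulU p (m a b) = U_zero" if "a \<in> U" "b \<in> U" for a b
    using m that by (simp add: ring_structs_def)
  have endo: "U.endo (\<lambda>a. m a b)" "U.endo (m a)" if "a \<in> U" "b \<in> U" for a b
    using m that by (auto simp: U.endo_def ring_structs_def biadditive_def)
  show ?thesis unfolding uw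
  proof (rule U.biadditive_add_kernel[OF ring_structs_biadditive[OF m] xy(1,3)])
    show "m (smulU p u) z = U_zero" if "z \<in> U" for z
      using U.endo_nsmul[OF endo(1)[OF uw(1) that] uw(1)] kill[OF uw(1) that] by simp
    show "m z (smulU p w) = U_zero" if "z \<in> U" for z
      using U.endo_nsmul[OF endo(2)[OF that uw(3)] uw(3)] kill[OF that uw(3)] by simp
  qed (use uw U.nsmul_closed in auto)
qed

lemma alg_structs_cong:
  assumes a: "a \<in> AS" and vw: "v \<in> V" "v' \<in> V" "w \<in> V" "w' \<in> V"
    and "\<And>i. i < t \<Longrightarrow> v i 0 = v' i 0" "\<And>i. i < t \<Longrightarrow> w i 0 = w' i 0"
  shows "a v' w' = a v w"
proof -
  obtain u u' where uu: "u \<in> V" "v' = addV v (act T u)" "u' \<in> V" "w' = addV w (act T u')"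
    using V_eq_add_T_multiple assms by metis
  have kill: "act T (a b c) = V_zero" if "b \<in> V" "c \<in> V" for b c
    using a that by (simp add: alg_structs_def)
  show ?thesis unfolding uu
  proof (rule V.biadditive_add_kernel[OF alg_structs_biadditive[OF a] vw(1,3)])
    show "a (act T u) z = V_zero" if "z \<in> V" for z
      using alg_structs_act[OF a T_in_C uu(1) that] kill[OF uu(1) that] by simp
    show "a z (act T u') = V_zero" if "z \<in> V" for z
      using alg_structs_act[OF a T_in_C that uu(3)] kill[OF that uu(3)] by simp
  qed (use uu in auto)
qed

definition alg_of_ring ::
    "((nat \<Rightarrow> int) \<Rightarrow> (nat \<Rightarrow> int) \<Rightarrow> nat \<Rightarrow> int) \<Rightarrow> (nat \<Rightarrow> nat \<Rightarrow> int) \<Rightarrow> (nat \<Rightarrow> nat \<Rightarrow> int) \<Rightarrow> nat \<Rightarrow> nat \<Rightarrow> int" where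
  "alg_of_ring m v w = digits (m (undigits v) (undigits w))"

definition ring_of_alg ::
    "((nat \<Rightarrow> nat \<Rightarrow> int) \<Rightarrow> (nat \<Rightarrow> nat \<Rightarrow> int) \<Rightarrow> nat \<Rightarrow> nat \<Rightarrow> int) \<Rightarrow> (nat \<Rightarrow> int) \<Rightarrow> (nat \<Rightarrow> int) \<Rightarrow> nat \<Rightarrow> int" where
  "ring_of_alg a x y = undigits (a (digits x) (digits y))"

lemma alg_of_ring_closed: "alg_of_ring m v w \<in> V"
  by (simp add: alg_of_ring_def)

lemma undigits_addV_mod_p:
  assumes "v \<in> V" "v' \<in> V" "i < t"
  shows "undigits (addV v v') i mod int p = addU (undigits v) (undigits v') i mod int p"
proof -
  have "undigits (addV v v') i mod int p = (v i 0 + v' i 0) mod int p"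
    using assms L_pos[OF assms(3)] by (simp add: undigits_mod_p V.add_closed addV_apply)
  also have "\<dots> = (undigits v i mod int p + undigits v' i mod int p) mod int p"
    using assms by (simp add: undigits_mod_p)
  also have "\<dots> = addU (undigits v) (undigits v') i mod int p"
    using assms by (simp add: addU_mod_p mod_add_eq)
  finally show ?thesis .
qed

lemma undigits_act_mod_p:
  assumes "v \<in> V" "c \<in> C" "i < t"
  shows "undigits (act c v) i mod int p = smulU (nat (c 0)) (undigits v) i mod int p"
proof -
  have "undigits (act c v) i mod int p = (c 0 * v i 0) mod int p"
    using assms L_pos[OF assms(3)] by (simp add: undigits_mod_p act_apply conv_0)
  also have "\<dots> = (c 0 * (undigits v i mod int p)) mod int p"
    using assms by (simp add: undigits_mod_p)
  also have "\<dots> = smulU (nat (c 0)) (undigits v) i mod int p"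
    using assms C_nonneg[OF assms(2)] by (simp add: smulU_mod_p mod_mult_right_eq)
  finally show ?thesis .
qed

lemma digits_addU_0: "i < t \<Longrightarrow> digits (addU x x') i 0 = addV (digits x) (digits x') i 0"
  using L_pos by (simp add: digits_def addV_apply addU_mod_p mod_add_eq)

lemma alg_of_ring_add:
  assumes m: "m \<in> RS" and v: "v \<in> V" "v' \<in> V" "w \<in> V"
  shows "alg_of_ring m (addV v v') w = addV (alg_of_ring m v w) (alg_of_ring m v' w)"
    and "alg_of_ring m w (addV v v') = addV (alg_of_ring m w v) (alg_of_ring m w v')"
proof -
  have "m (undigits (addV v v')) (undigits w) = m (addU (undigits v) (undigits v')) (undigits w)"
    "m (undigits w) (undigits (addV v v')) = m (undigits w) (addU (undigits v) (undigits v'))"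
    using v by (auto intro!: ring_structs_cong[OF m] simp: undigits_addV_mod_p V.add_closed U.add_closed)
  then show "alg_of_ring m (addV v v') w = addV (alg_of_ring m v w) (alg_of_ring m v' w)"
    and "alg_of_ring m w (addV v v') = addV (alg_of_ring m w v) (alg_of_ring m w v')"
    using ring_structs_biadditive[OF m] v
    by (simp_all add: alg_of_ring_def biadditive_def digits_add_socU ring_structs_socU[OF m])
qed

lemma alg_of_ring_act:
  assumes m: "m \<in> RS" and c: "c \<in> C" and v: "v \<in> V" "w \<in> V"
  shows "alg_of_ring m (act c v) w = act c (alg_of_ring m v w)"
    and "alg_of_ring m v (act c w) = act c (alg_of_ring m v w)"
proof -
  let ?k = "nat (c 0)"
  have cong: "m (undigits (act c v)) (undigits w) = m (smulU ?k (undigits v)) (undigits w)"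
    "m (undigits v) (undigits (act c w)) = m (undigits v) (smulU ?k (undigits w))"
    using v c by (auto intro!: ring_structs_cong[OF m] simp: undigits_act_mod_p U.nsmul_closed)
  have endo: "U.endo (\<lambda>x. m x (undigits w))" "U.endo (m (undigits v))"
    using m v by (auto simp: U.endo_def ring_structs_def biadditive_def)
  have "m (undigits (act c v)) (undigits w) = smulU ?k (m (undigits v) (undigits w))"
    "m (undigits v) (undigits (act c w)) = smulU ?k (m (undigits v) (undigits w))"
    using cong v U.endo_nsmul[OF endo(1), of "undigits v" ?k] U.endo_nsmul[OF endo(2), of "undigits w" ?k]
    by auto
  then show "alg_of_ring m (act c v) w = act c (alg_of_ring m v w)"
    and "alg_of_ring m v (act c w) = act c (alg_of_ring m v w)"
    using v c by (simp_all add: alg_of_ring_def digits_smul_socU ring_structs_socU[OF m])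
qed

lemma alg_of_ring_in_alg_structs:
  assumes m: "m \<in> RS"
  shows "alg_of_ring m \<in> AS"
  unfolding alg_structs_def biadditive_def ops_compatible_def
proof (intro CollectI conjI ballI)
  fix v w assume "v \<in> V" "w \<in> V"
  then show "act T (alg_of_ring m v w) = V_zero"
    using act_T_eq_zero_iff by (simp add: alg_of_ring_def digits_socU_in ring_structs_socU[OF m])
qed (auto simp: alg_of_ring_add[OF m] alg_of_ring_act[OF m] V_ops_def alg_of_ring_closed)

lemma ring_of_alg_in_ring_structs:
  assumes a: "a \<in> AS"
  shows "ring_of_alg a \<in> RS"
  unfolding ring_structs_def biadditive_def
proof (intro CollectI conjI ballI)
  fix x y z assume xyz: "x \<in> U" "y \<in> U" "z \<in> U"
  have "a (digits (addU x y)) (digits z) = a (addV (digits x) (digits y)) (digits z)"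
    "a (digits z) (digits (addU x y)) = a (digits z) (addV (digits x) (digits y))"
    by (auto intro!: alg_structs_cong[OF a] simp: digits_addU_0 V.add_closed)
  then show "ring_of_alg a (addU x y) z = addU (ring_of_alg a x z) (ring_of_alg a y z)"
    and "ring_of_alg a z (addU x y) = addU (ring_of_alg a z x) (ring_of_alg a z y)"
    using alg_structs_biadditive[OF a]
    by (simp_all add: ring_of_alg_def biadditive_def undigits_add_socV alg_structs_socV[OF a])
next
  fix x y assume "x \<in> U" "y \<in> U"
  show "ring_of_alg a x y \<in> U" using alg_structs_closed[OF a] by (simp add: ring_of_alg_def)
  show "smulU p (ring_of_alg a x y) = U_zero"
    using smulU_p_eq_zero_iff undigits_socV_in alg_structs_socV[OF a] socU_in_U
    by (simp add: ring_of_alg_def)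
qed

lemma alg_of_ring_digits: "x \<in> U \<Longrightarrow> y \<in> U \<Longrightarrow> alg_of_ring m (digits x) (digits y) = digits (m x y)"
  by (simp add: alg_of_ring_def)

lemma alg_of_ring_ring_of_alg:
  "a \<in> AS \<Longrightarrow> v \<in> V \<Longrightarrow> w \<in> V \<Longrightarrow> alg_of_ring (ring_of_alg a) v w = a v w"
  by (simp add: alg_of_ring_def ring_of_alg_def alg_structs_closed)

lemma alg_of_ring_is_lie:
  assumes m: "m \<in> RS" and lie: "is_lie U addU U_zero m"
  shows "is_lie V addV V_zero (alg_of_ring m)"
  by (rule is_lie_transfer[OF lie, where h = digits and h' = undigits and P = socU])
    (simp_all add: ring_structs_socU[OF m] subset_iff socU_in_U socU_add digits_add_socU digits_zero
      alg_of_ring_def)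

lemma ring_of_alg_is_lie:
  assumes a: "a \<in> AS" and lie: "is_lie V addV V_zero a"
  shows "is_lie U addU U_zero (ring_of_alg a)"
  by (rule is_lie_transfer[OF lie, where h = undigits and h' = digits and P = socV])
    (simp_all add: alg_structs_socV[OF a] subset_iff socV_in_V socV_add undigits_add_socV undigits_zero
      ring_of_alg_def socV_in_V)

lemma alg_of_ring_nilpotent:
  assumes m: "m \<in> RS"
  shows "nilpotent_alg U addU U_zero negU {} m \<longleftrightarrow> nilpotent_alg V addV V_zero negV OpsV (alg_of_ring m)"
proof (rule nilpotent_alg_transfer[where h = digits])
  show "bij_betw digits U V" by (rule bij_betw_digits)
  show "U_zero \<in> U" by (rule U.zero_closed)
  show "digits U_zero = V_zero" by (rule digits_zero)
  show "prod_span U addU U_zero negU {} m S \<subseteq> U" if "S \<subseteq> U" for S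
    using that by (rule U.prod_span_closed) (rule ring_structs_closed[OF m])
  fix S assume S: "S \<subseteq> U"
  show "digits ` prod_span U addU U_zero negU {} m S = prod_span V addV V_zero negV OpsV (alg_of_ring m) (digits ` S)"
  proof (rule image_prod_span_eq[OF S, where h' = undigits])
    show "digits ` prod_span U addU U_zero negU {} m S
        \<subseteq> prod_span V addV V_zero negV OpsV (alg_of_ring m) (digits ` S)"
      by (rule image_prod_span_subset[where P = socU])
        (use S in \<open>auto simp: socU_zero socU_add socU_neg ring_structs_socU[OF m] digits_zero
          digits_add_socU digits_neg_socU alg_of_ring_digits\<close>)
    show "undigits ` prod_span V addV V_zero negV OpsV (alg_of_ring m) (digits ` S)
        \<subseteq> prod_span U addU U_zero negU {} m (undigits ` digits ` S)"
    proof (rule image_prod_span_subset[where P = socV])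
      fix \<phi> v assume "\<phi> \<in> OpsV" "v \<in> socV"
        and v: "undigits v \<in> prod_span U addU U_zero negU {} m (undigits ` digits ` S)"
      then obtain c where "c \<in> C" "\<phi> = act c" by (auto simp: V_ops_def)
      then show "undigits (\<phi> v) \<in> prod_span U addU U_zero negU {} m (undigits ` digits ` S)"
        using prod_span_nsmul[OF v] \<open>v \<in> socV\<close> by (simp add: undigits_act_socV)
    qed (use S in \<open>auto simp: socV_zero socV_add socV_neg socV_act V_ops_def alg_of_ring_def
        digits_socU_in ring_structs_socU[OF m] ring_structs_closed[OF m] undigits_zero
        undigits_add_socV undigits_neg_socV\<close>)
    show "prod_span V addV V_zero negV OpsV (alg_of_ring m) (digits ` S) \<subseteq> V"
      by (rule V.prod_span_closed) (auto simp: alg_of_ring_closed)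
  qed simp_all
qed

subsection \<open>Endomorphisms as matrices\<close>

definition unitU :: "nat \<Rightarrow> nat \<Rightarrow> int" where
  "unitU i = (\<lambda>j. if j = i then 1 else 0)"

definition unitV :: "nat \<Rightarrow> nat \<Rightarrow> nat \<Rightarrow> int" where
  "unitV i = (\<lambda>j l. if j = i \<and> l = 0 then 1 else 0)"

definition U_mat :: "(nat \<Rightarrow> nat \<Rightarrow> int) \<Rightarrow> (nat \<Rightarrow> int) \<Rightarrow> nat \<Rightarrow> int" where
  "U_mat X x = (\<lambda>j. if j < t then (\<Sum>i<t. x i * X i j) mod (int p ^ L j) else 0)"

definition V_mat :: "(nat \<Rightarrow> nat \<Rightarrow> nat \<Rightarrow> int) \<Rightarrow> (nat \<Rightarrow> nat \<Rightarrow> int) \<Rightarrow> nat \<Rightarrow> nat \<Rightarrow> int" where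
  "V_mat Y v = (\<lambda>j l. if j < t \<and> l < L j then (\<Sum>i<t. conv (v i) (Y i j) l) mod int p else 0)"

definition U_admissible :: "(nat \<Rightarrow> nat \<Rightarrow> int) \<Rightarrow> bool" where
  "U_admissible X \<longleftrightarrow> (\<forall>i<t. \<forall>j<t. int p ^ (L j - L i) dvd X i j)"

definition V_admissible :: "(nat \<Rightarrow> nat \<Rightarrow> nat \<Rightarrow> int) \<Rightarrow> bool" where
  "V_admissible Y \<longleftrightarrow> (\<forall>i<t. \<forall>j<t. \<forall>r. r + L i < L j \<longrightarrow> Y i j r = 0)"

lemma unitU_in: "i < t \<Longrightarrow> unitU i \<in> U"
  using one_less_power[OF _ L_pos, of "int p" i] p_gt_1 by (auto simp: memU unitU_def)

lemma unitV_in: "i < t \<Longrightarrow> unitV i \<in> V"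
  using L_pos p_gt_1 by (auto simp: memV unitV_def)

lemma U_mat_in [simp]: "U_mat X x \<in> U"
  by (simp add: U_mat_def memU)

lemma V_mat_in [simp]: "V_mat Y v \<in> V"
  by (simp add: V_mat_def memV)

lemma U_mat_endo:
  assumes X: "U_admissible X"
  shows "U.endo (U_mat X)"
  unfolding U.endo_def
proof (intro conjI ballI)
  fix x y assume "x \<in> U" "y \<in> U"
  show "U_mat X (addU x y) = addU (U_mat X x) (U_mat X y)"
  proof (rule U_eqI)
    fix j assume j: "j < t"
    have "(\<Sum>i<t. addU x y i * X i j) mod int p ^ L j = (\<Sum>i<t. x i * X i j + y i * X i j) mod int p ^ L j"
    proof (rule sum_mod_cong)
      fix i assume "i \<in> {..<t}"
      then show "(addU x y i * X i j) mod int p ^ L j = (x i * X i j + y i * X i j) mod int p ^ L j"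
        using mod_power_mult_left[of "int p" "L j" "L i" "X i j" "x i + y i"] X j
        by (simp add: U_admissible_def addU_apply algebra_simps)
    qed
    then show "U_mat X (addU x y) j = addU (U_mat X x) (U_mat X y) j"
      using j by (simp add: U_mat_def addU_apply sum.distrib mod_add_eq)
  qed (simp_all add: U.add_closed)
qed simp

lemma V_admissible_conv_truncate:
  assumes "V_admissible Y" "i < t" "j < t" "l < L j"
  shows "conv (\<lambda>s. if s < L i then a s else 0) (Y i j) l = conv a (Y i j) l"
  using assms by (intro conv_truncate_left) (auto simp: V_admissible_def)

lemma V_mat_endo:
  assumes Y: "V_admissible Y"
  shows "V.endo (V_mat Y)"
  unfolding V.endo_def
proof (intro conjI ballI)
  fix v w assume "v \<in> V" "w \<in> V"
  show "V_mat Y (addV v w) = addV (V_mat Y v) (V_mat Y w)"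
  proof (rule V_eqI)
    fix j l assume jl: "j < t" "l < L j"
    have "(\<Sum>i<t. conv (addV v w i) (Y i j) l) mod int p
        = (\<Sum>i<t. conv (v i) (Y i j) l + conv (w i) (Y i j) l) mod int p"
    proof (rule sum_mod_cong)
      fix i assume "i \<in> {..<t}"
      then have "conv (addV v w i) (Y i j) l = conv (\<lambda>s. (v i s + w i s) mod int p) (Y i j) l"
        using V_admissible_conv_truncate[OF Y _ jl] by (simp add: addV_apply[abs_def])
      then show "conv (addV v w i) (Y i j) l mod int p
          = (conv (v i) (Y i j) l + conv (w i) (Y i j) l) mod int p"
        by (simp add: conv_mod_left conv_add_left)
    qed
    then show "V_mat Y (addV v w) j l = addV (V_mat Y v) (V_mat Y w) j l"
      using jl by (simp add: V_mat_def addV_apply sum.distrib mod_add_eq)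
  qed (simp_all add: V.add_closed)
qed simp

lemma V_mat_act:
  assumes Y: "V_admissible Y"
  shows "V_mat Y (act c v) = act c (V_mat Y v)"
proof (rule V_eqI)
  fix j l assume jl: "j < t" "l < L j"
  have "(\<Sum>i<t. conv (act c v i) (Y i j) l) mod int p = (\<Sum>i<t. conv c (conv (v i) (Y i j)) l) mod int p"
  proof (rule sum_mod_cong)
    fix i assume "i \<in> {..<t}"
    then have "conv (act c v i) (Y i j) l = conv (\<lambda>s. conv c (v i) s mod int p) (Y i j) l"
      using V_admissible_conv_truncate[OF Y _ jl] by (simp add: act_apply[abs_def])
    then show "conv (act c v i) (Y i j) l mod int p = conv c (conv (v i) (Y i j)) l mod int p"
      by (simp add: conv_mod_left conv_assoc)
  qed
  moreover have "act c (V_mat Y v) j l = (\<Sum>i<t. conv c (conv (v i) (Y i j)) l) mod int p"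
  proof -
    have "conv c (V_mat Y v j) l = conv c (\<lambda>s. (\<Sum>i<t. conv (v i) (Y i j) s) mod int p) l"
      using jl by (intro conv_cong_right) (simp add: V_mat_def)
    then show ?thesis
      using jl by (simp add: act_apply conv_mod_right conv_sum_right)
  qed
  ultimately show "V_mat Y (act c v) j l = act c (V_mat Y v) j l"
    using jl by (simp add: V_mat_def)
qed simp_all

lemma U_endo_eq_U_mat:
  assumes f: "U.endo f" and x: "x \<in> U"
  shows "f x = U_mat (\<lambda>i. f (unitU i)) x"
proof -
  define prefix where "prefix k = (\<lambda>i. if i < k then x i else 0)" for k
  have prefix_in: "prefix k \<in> U" for k
    using x by (auto simp: memU prefix_def)
  have prefix_Suc: "prefix (Suc k) = addU (prefix k) (smulU (nat (x k)) (unitU k))" if k: "k < t" for k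
  proof (rule U_eqI[OF prefix_in U.add_closed[OF prefix_in U.nsmul_closed[OF unitU_in[OF k]]]])
    fix i assume i: "i < t"
    have "smulU (nat (x k)) (unitU k) i = (if i = k then x k else 0)"
      unfolding smulU_apply[OF unitU_in[OF k]] using x i k memU_mod[OF x] by (simp add: unitU_def memU)
    then show "prefix (Suc k) i = addU (prefix k) (smulU (nat (x k)) (unitU k)) i"
      using i memU_mod[OF x i] by (auto simp: prefix_def addU_apply less_Suc_eq)
  qed
  have image_prefix: "k \<le> t \<Longrightarrow> f (prefix k) = (\<lambda>j. if j < t then (\<Sum>i<k. x i * f (unitU i) j) mod (int p ^ L j) else 0)"
    for k
  proof (induction k)
    case 0
    have "prefix 0 = U_zero" by (simp add: prefix_def U_zero_def fun_eq_iff)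
    then show ?case using U.endo_zero[OF f] by (simp add: U_zero_def fun_eq_iff)
  next
    case (Suc k)
    then have k: "k < t" by simp
    have "f (prefix (Suc k)) = addU (f (prefix k)) (smulU (nat (x k)) (f (unitU k)))"
      using prefix_Suc[OF k] f unitU_in[OF k] prefix_in
      by (simp add: U.endo_add U.endo_nsmul U.nsmul_closed)
    then show ?case
      using Suc k x U.endo_closed[OF f unitU_in[OF k]]
      by (auto simp: fun_eq_iff addU_apply smulU_apply memU mod_add_eq algebra_simps)
  qed
  moreover have "prefix t = x" using x by (auto simp: prefix_def memU fun_eq_iff)
  ultimately show ?thesis using image_prefix[of t] by (simp add: U_mat_def)
qed

lemma conv_unitV: "conv a (unitV k i) l = (if i = k then a l else 0)"
proof -
  have "conv a (unitV k i) l = (\<Sum>s\<in>{0..l}. if s = l then (if i = k then a l else 0) else 0)"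
    unfolding conv_def by (rule sum.cong) (auto simp: unitV_def)
  then show ?thesis by simp
qed

lemma V_endo_eq_V_mat:
  assumes g: "V.endo g" and g_act: "\<And>c w. c \<in> C \<Longrightarrow> w \<in> V \<Longrightarrow> g (act c w) = act c (g w)"
    and v: "v \<in> V"
  shows "g v = V_mat (\<lambda>i. g (unitV i)) v"
proof -
  define prefix where "prefix k = (\<lambda>i l. if i < k then v i l else 0)" for k
  have prefix_in: "prefix k \<in> V" for k
    using v by (auto simp: memV prefix_def)
  have prefix_Suc: "prefix (Suc k) = addV (prefix k) (act (v k) (unitV k))" if k: "k < t" for k
    by (rule V_eqI[OF prefix_in V.add_closed[OF prefix_in act_in]])
      (use memV_mod[OF v] in \<open>auto simp: prefix_def addV_apply act_apply conv_unitV less_Suc_eq\<close>)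
  have image_prefix: "k \<le> t \<Longrightarrow> g (prefix k)
      = (\<lambda>j l. if j < t \<and> l < L j then (\<Sum>i<k. conv (v i) (g (unitV i) j) l) mod int p else 0)" for k
  proof (induction k)
    case 0
    have "prefix 0 = V_zero" by (simp add: prefix_def V_zero_def fun_eq_iff)
    then show ?case using V.endo_zero[OF g] by (simp add: V_zero_def fun_eq_iff)
  next
    case (Suc k)
    then have k: "k < t" by simp
    have "g (prefix (Suc k)) = addV (g (prefix k)) (act (v k) (g (unitV k)))"
      using prefix_Suc[OF k] g prefix_in unitV_in[OF k] g_act[OF row_in_C[OF v k] unitV_in[OF k]]
      by (simp add: V.endo_add)
    then show ?case using Suc k by (auto simp: fun_eq_iff addV_apply act_apply mod_add_eq)
  qed
  moreover have "prefix t = v" using v by (auto simp: prefix_def memV fun_eq_iff)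
  ultimately show ?thesis using image_prefix[of t] by (simp add: V_mat_def)
qed

lemma funpow_act_in: "w \<in> V \<Longrightarrow> (act c ^^ k) w \<in> V"
  by (cases k) simp_all

lemma U_endo_admissible:
  assumes f: "U.endo f"
  shows "U_admissible (\<lambda>i j. f (unitU i) j)"
  unfolding U_admissible_def
proof (intro allI impI)
  fix i j assume ij: "i < t" "j < t"
  have "smulU (p ^ L i) (unitU i) = U_zero"
    unfolding smulU_apply[OF unitU_in[OF ij(1)]] by (auto simp: U_zero_def fun_eq_iff unitU_def)
  then have "smulU (p ^ L i) (f (unitU i)) = U_zero"
    using U.endo_nsmul[OF f unitU_in[OF ij(1)], of "p ^ L i"] U.endo_zero[OF f] by argo
  then have "(int p ^ L i * f (unitU i) j) mod int p ^ L j = 0"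
    unfolding smulU_apply[OF U.endo_closed[OF f unitU_in[OF ij(1)]]] using ij
    by (simp add: U_zero_def fun_eq_iff) (metis of_nat_power)
  then show "int p ^ (L j - L i) dvd f (unitU i) j"
    by (simp add: mod_eq_0_iff_dvd power_dvd_mult_power_iff[symmetric])
qed

lemma V_endo_admissible:
  assumes g: "V.endo g" and g_T: "\<And>w. w \<in> V \<Longrightarrow> g (act T w) = act T (g w)"
  shows "V_admissible (\<lambda>i. g (unitV i))"
  unfolding V_admissible_def
proof (intro allI impI)
  fix i j r assume ij: "i < t" "j < t" and r: "r + L i < L j"
  show "g (unitV i) j r = 0"
  proof (cases "1 < n")
    case True
    have "(act T ^^ k) (g w) = g ((act T ^^ k) w)" if "w \<in> V" for k w
      using that by (induction k) (simp_all add: g_T funpow_act_in)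
    then have "(act T ^^ L i) (g (unitV i)) = g ((act T ^^ L i) (unitV i))"
      using unitV_in[OF ij(1)] by blast
    also have "(act T ^^ L i) (unitV i) = V_zero"
      using True unitV_in[OF ij(1)] by (auto simp: act_T_power_apply unitV_def V_zero_def fun_eq_iff)
    finally have "(act T ^^ L i) (g (unitV i)) j (r + L i) = 0"
      using V.endo_zero[OF g] by (simp add: V_zero_def)
    then show ?thesis
      using True ij r by (simp add: act_T_power_apply V.endo_closed[OF g unitV_in[OF ij(1)]])
  next
    case False
    then show ?thesis using L_eq_1 ij r by simp
  qed
qed

definition digit_matrices :: "(nat \<Rightarrow> nat \<Rightarrow> int) \<Rightarrow> (nat \<Rightarrow> nat \<Rightarrow> nat \<Rightarrow> int) \<Rightarrow> bool" where
  "digit_matrices X Y \<longleftrightarrow> U_admissible X \<and> (\<forall>i<t. X i \<in> U \<and> Y i = digits (X i))"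

lemma digit_matrices_of_U_endo:
  "U.endo f \<Longrightarrow> digit_matrices (\<lambda>i. f (unitU i)) (\<lambda>i. digits (f (unitU i)))"
  using U_endo_admissible[of f] by (simp add: digit_matrices_def U.endo_closed unitU_in)

lemma digit_matrices_of_V_endo:
  assumes g: "V.endo g" and g_T: "\<And>w. w \<in> V \<Longrightarrow> g (act T w) = act T (g w)"
  shows "digit_matrices (\<lambda>i. undigits (g (unitV i))) (\<lambda>i. g (unitV i))"
  unfolding digit_matrices_def U_admissible_def
proof (intro conjI allI impI)
  fix i j assume ij: "i < t" "j < t"
  have gi: "g (unitV i) \<in> V" using g unitV_in[OF ij(1)] by (rule V.endo_closed)
  have "int p ^ (L j - L i) dvd g (unitV i) j l * int p ^ l" for l
  proof (cases "l + L i < L j")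
    case True
    then show ?thesis using V_endo_admissible[OF g g_T] ij by (simp add: V_admissible_def)
  next
    case False
    then show ?thesis by (simp add: le_imp_power_dvd)
  qed
  then show "int p ^ (L j - L i) dvd undigits (g (unitV i)) j"
    using ij by (simp add: undigits_def dvd_sum)
qed (simp_all add: V.endo_closed[OF g] unitV_in)

lemma digit_matrices_V_admissible:
  assumes "digit_matrices X Y"
  shows "V_admissible Y"
  unfolding V_admissible_def
proof (intro allI impI)
  fix i j r assume ij: "i < t" "j < t" and r: "r + L i < L j"
  have "int p ^ (L j - L i) dvd X i j" using assms ij by (simp add: digit_matrices_def U_admissible_def)
  moreover have "int p ^ Suc r dvd int p ^ (L j - L i)" using r by (intro le_imp_power_dvd) simp
  ultimately obtain k where "X i j = int p ^ Suc r * k" by (meson dvd_trans dvdE)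
  then have "(X i j div int p ^ r) mod int p = 0" by (simp add: mult.assoc)
  then show "Y i j r = 0" using assms ij r by (simp add: digit_matrices_def digits_def)
qed

lemma digit_matrices_top:
  assumes Y: "digit_matrices X Y" and v: "v \<in> V" and j: "j < t"
  shows "V_mat Y v j 0 = U_mat X (undigits v) j mod int p"
proof -
  have "V_mat Y v j 0 = (\<Sum>i<t. v i 0 * Y i j 0) mod int p"
    using j L_pos[OF j] by (simp add: V_mat_def conv_0)
  also have "\<dots> = (\<Sum>i<t. undigits v i * X i j) mod int p"
  proof (rule sum_mod_cong)
    fix i assume "i \<in> {..<t}"
    then have "Y i j 0 = X i j mod int p" using Y j L_pos[OF j] by (simp add: digit_matrices_def digits_def)
    moreover have "v i 0 = undigits v i mod int p" using undigits_mod_p[OF v] \<open>i \<in> {..<t}\<close> by simp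
    ultimately show "v i 0 * Y i j 0 mod int p = undigits v i * X i j mod int p"
      by (simp add: mod_mult_right_eq mod_mult_left_eq)
  qed
  also have "\<dots> = U_mat X (undigits v) j mod int p"
    using j by (simp add: U_mat_def mod_mod_cancel p_dvd_p_power_L)
  finally show ?thesis .
qed

lemma U_mat_socU:
  assumes X: "U_admissible X" and z: "z \<in> socU" and j: "j < t"
  shows "U_mat X z j = ((\<Sum>i<t. if L i \<le> L j then (z i div int p ^ (L i - 1)) * (X i j div int p ^ (L j - L i))
    else 0) mod int p) * int p ^ (L j - 1)"
proof -
  define c where "c i = z i div int p ^ (L i - 1)" for i
  define q where "q i = X i j div int p ^ (L j - L i)" for i
  have "(\<Sum>i<t. z i * X i j) mod int p ^ L j
      = (\<Sum>i<t. (if L i \<le> L j then c i * q i else 0) * int p ^ (L j - 1)) mod int p ^ L j"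
  proof (rule sum_mod_cong)
    fix i assume "i \<in> {..<t}"
    then have i: "i < t" by simp
    have zi: "z i = c i * int p ^ (L i - 1)" using socU_digit(1)[OF z i] by (simp add: c_def)
    show "z i * X i j mod int p ^ L j = (if L i \<le> L j then c i * q i else 0) * int p ^ (L j - 1) mod int p ^ L j"
    proof (cases "L i \<le> L j")
      case True
      have Xij: "X i j = int p ^ (L j - L i) * q i" using X i j by (simp add: U_admissible_def q_def)
      have "z i * X i j = c i * q i * (int p ^ (L i - 1) * int p ^ (L j - L i))"
        unfolding zi Xij by (simp only: mult_ac)
      also have "int p ^ (L i - 1) * int p ^ (L j - L i) = int p ^ (L j - 1)"
        using True L_pos[OF i] by (simp add: power_add[symmetric])
      finally have "z i * X i j = c i * q i * int p ^ (L j - 1)" .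
      then show ?thesis using True by simp
    next
      case False
      then have "int p ^ L j dvd z i" unfolding zi by (simp add: le_imp_power_dvd)
      then show ?thesis using False by simp
    qed
  qed
  also have "\<dots> = ((\<Sum>i<t. if L i \<le> L j then c i * q i else 0) * int p ^ (L j - 1)) mod (int p * int p ^ (L j - 1))"
    by (simp add: sum_distrib_right p_power_L[OF j])
  also have "\<dots> = ((\<Sum>i<t. if L i \<le> L j then c i * q i else 0) mod int p) * int p ^ (L j - 1)"
    by (rule mod_mult_mult2)
  finally show ?thesis using j unfolding c_def q_def by (simp add: U_mat_def)
qed

lemma conv_digits_socU:
  assumes Y: "digit_matrices X Y" and z: "z \<in> socU" and ij: "i < t" "j < t" and l: "l < L j"
  shows "conv (digits z i) (Y i j) l = (if l = L j - 1 \<and> L i \<le> L j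
    then (z i div int p ^ (L i - 1)) * ((X i j div int p ^ (L j - L i)) mod int p) else 0)"
proof -
  have "conv (digits z i) (Y i j) l
      = (\<Sum>s\<in>{0..l}. if s = L i - 1 then (z i div int p ^ (L i - 1)) * Y i j (l - s) else 0)"
    unfolding conv_def by (rule sum.cong) (auto simp: digits_socU[OF z ij(1)])
  also have "\<dots> = (if L i - 1 \<le> l then (z i div int p ^ (L i - 1)) * Y i j (l - (L i - 1)) else 0)"
    by simp
  also have "\<dots> = (if l = L j - 1 \<and> L i \<le> L j
      then (z i div int p ^ (L i - 1)) * ((X i j div int p ^ (L j - L i)) mod int p) else 0)"
  proof -
    have "Y i j (l - (L i - 1)) = 0" if "L i - 1 \<le> l" "l \<noteq> L j - 1"
      using digit_matrices_V_admissible[OF Y] ij l that L_pos[OF ij(1)] by (simp add: V_admissible_def)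
    moreover have "Y i j (L j - L i) = (X i j div int p ^ (L j - L i)) mod int p" if "L i \<le> L j"
      using Y ij that L_pos[OF ij(1)] by (simp add: digit_matrices_def digits_def)
    ultimately show ?thesis using l L_pos[OF ij(1)] by auto
  qed
  finally show ?thesis .
qed

lemma digit_matrices_socle:
  assumes Y: "digit_matrices X Y" and z: "z \<in> socU"
  shows "V_mat Y (digits z) = digits (U_mat X z)"
proof (rule V_eqI)
  fix j l assume j: "j < t" and l: "l < L j"
  define Q where "Q = (\<Sum>i<t. if L i \<le> L j then (z i div int p ^ (L i - 1)) * (X i j div int p ^ (L j - L i)) else 0)"
  have X: "U_admissible X" using Y by (simp add: digit_matrices_def)
  have "U_mat X z \<in> socU" using U_mat_socU[OF X z] by (simp add: socU_def)
  then have "digits (U_mat X z) j l = (if l = L j - 1 then Q mod int p else 0)"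
    using digits_socU[of "U_mat X z" j l] j l U_mat_socU[OF X z j] by (simp add: Q_def)
  moreover have "V_mat Y (digits z) j l = (if l = L j - 1 then Q mod int p else 0)"
  proof -
    have "V_mat Y (digits z) j l = (\<Sum>i<t. if l = L j - 1 \<and> L i \<le> L j
        then (z i div int p ^ (L i - 1)) * ((X i j div int p ^ (L j - L i)) mod int p) else 0) mod int p"
      using j l conv_digits_socU[OF Y z _ j l] by (simp add: V_mat_def)
    also have "\<dots> = (if l = L j - 1 then Q mod int p else 0)"
      unfolding Q_def by (auto intro!: sum_mod_cong simp: mod_mult_right_eq)
    finally show ?thesis .
  qed
  ultimately show "V_mat Y (digits z) j l = digits (U_mat X z) j l" by simp
qed simp_all

subsection \<open>Isomorphisms\<close>

lemma U_inj_iff_socU: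
  assumes f: "U.endo f"
  shows "inj_on f U \<longleftrightarrow> (\<forall>z\<in>socU. f z = U_zero \<longrightarrow> z = U_zero)"
proof
  assume "inj_on f U"
  then show "\<forall>z\<in>socU. f z = U_zero \<longrightarrow> z = U_zero" using U.inj_on_endo_iff[OF f] socU_in_U by blast
next
  assume ker: "\<forall>z\<in>socU. f z = U_zero \<longrightarrow> z = U_zero"
  have power: "((\<lambda>x. smulU p x) ^^ k) x = smulU (p ^ k) x" if "x \<in> U" for k x
    using that by (induction k) (simp_all add: smulU_mult U.nsmul_closed U.add_zero)
  have "smulU (p ^ n) x = U_zero" if "x \<in> U" for x
    unfolding smulU_apply[OF that] by (auto simp: U_zero_def fun_eq_iff le_imp_power_dvd L_le_n)
  then show "inj_on f U"
    using f ker power smulU_p_eq_zero_iff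
    by (intro U.inj_on_endo_if_inj_on_kernel[where \<phi> = "\<lambda>x. smulU p x" and N = n])
      (simp_all add: U.nsmul_closed U.nsmul_zero U.endo_nsmul)
qed

lemma V_inj_iff_socV:
  assumes g: "V.endo g" and g_T: "\<And>v. v \<in> V \<Longrightarrow> g (act T v) = act T (g v)"
  shows "inj_on g V \<longleftrightarrow> (\<forall>w\<in>socV. g w = V_zero \<longrightarrow> w = V_zero)"
proof
  assume "inj_on g V"
  then show "\<forall>w\<in>socV. g w = V_zero \<longrightarrow> w = V_zero" using V.inj_on_endo_iff[OF g] socV_in_V by blast
next
  assume "\<forall>w\<in>socV. g w = V_zero \<longrightarrow> w = V_zero"
  then show "inj_on g V"
    using g g_T act_T_eq_zero_iff act_T_nilpotent
    by (intro V.inj_on_endo_if_inj_on_kernel[where \<phi> = "act T" and N = n]) (simp_all add: act_zero)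
qed

lemma digits_eq_zero_iff:
  assumes "x \<in> U"
  shows "digits x = V_zero \<longleftrightarrow> x = U_zero"
proof
  assume "digits x = V_zero"
  then show "x = U_zero" using undigits_digits[OF assms] undigits_zero by simp
qed (simp add: digits_zero)

lemma socV_eq_image_digits: "socV = digits ` socU"
proof
  show "socV \<subseteq> digits ` socU"
  proof
    fix w assume "w \<in> socV"
    then have "w = digits (undigits w)" "undigits w \<in> socU" using socV_in_V undigits_socV_in by simp_all
    then show "w \<in> digits ` socU" by (rule image_eqI)
  qed
qed (use digits_socU_in in auto)

lemma digit_matrices_inj_iff:
  assumes Y: "digit_matrices X Y"
  shows "inj_on (U_mat X) U \<longleftrightarrow> inj_on (V_mat Y) V"
proof -
  have X: "U_admissible X" using Y by (simp add: digit_matrices_def)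
  have Y': "V_admissible Y" using Y by (rule digit_matrices_V_admissible)
  have "(\<forall>w\<in>socV. V_mat Y w = V_zero \<longrightarrow> w = V_zero)
      \<longleftrightarrow> (\<forall>z\<in>socU. V_mat Y (digits z) = V_zero \<longrightarrow> digits z = V_zero)"
    unfolding socV_eq_image_digits by blast
  also have "\<dots> \<longleftrightarrow> (\<forall>z\<in>socU. U_mat X z = U_zero \<longrightarrow> z = U_zero)"
    using digit_matrices_socle[OF Y] digits_eq_zero_iff socU_in_U by (intro ball_cong) simp_all
  finally show ?thesis
    using U_inj_iff_socU[OF U_mat_endo[OF X]] V_inj_iff_socV[OF V_mat_endo[OF Y']] V_mat_act[OF Y'] by simp
qed

lemma finite_U: "finite U"
proof (rule finite_subset)
  show "U \<subseteq> {x. \<forall>i. (i \<in> {..<t} \<longrightarrow> x i \<in> {0..int p ^ n}) \<and> (i \<notin> {..<t} \<longrightarrow> x i = 0)}"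
  proof (intro subsetI CollectI allI conjI impI)
    fix x i assume x: "x \<in> U"
    show "x i \<in> {0..int p ^ n}" if "i \<in> {..<t}"
    proof -
      have "int p ^ L i \<le> int p ^ n" using L_le_n that p_gt_1 by (intro power_increasing) auto
      then show ?thesis using x that by (auto simp: memU)
    qed
    show "x i = 0" if "i \<notin> {..<t}" using x that by (auto simp: memU)
  qed
  show "finite {x. \<forall>i. (i \<in> {..<t} \<longrightarrow> x i \<in> {0..int p ^ n}) \<and> (i \<notin> {..<t} \<longrightarrow> x i = (0::int))}"
    by (rule finite_set_of_finite_funs) auto
qed

lemma finite_V: "finite V"
  using bij_betw_finite[OF bij_betw_digits] finite_U by simp

lemma U_bij_iff_inj: "U.endo f \<Longrightarrow> bij_betw f U U \<longleftrightarrow> inj_on f U"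
  using endo_inj_surj[OF finite_U, of f] by (auto simp: bij_betw_def U.endo_def)

lemma V_bij_iff_inj: "V.endo g \<Longrightarrow> bij_betw g V V \<longleftrightarrow> inj_on g V"
  using endo_inj_surj[OF finite_V, of g] by (auto simp: bij_betw_def V.endo_def)

lemma digits_eq_iff: "x \<in> U \<Longrightarrow> y \<in> U \<Longrightarrow> digits x = digits y \<longleftrightarrow> x = y"
  by (metis undigits_digits)

lemma digit_matrices_mult_iff:
  assumes Y: "digit_matrices X Y" and m1: "m1 \<in> RS" and m2: "m2 \<in> RS"
  shows "(\<forall>x\<in>U. \<forall>y\<in>U. U_mat X (m1 x y) = m2 (U_mat X x) (U_mat X y))
    \<longleftrightarrow> (\<forall>v\<in>V. \<forall>w\<in>V. V_mat Y (alg_of_ring m1 v w) = alg_of_ring m2 (V_mat Y v) (V_mat Y w))"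
proof -
  have top: "U_mat X (undigits v) i mod int p = undigits (V_mat Y v) i mod int p" if "v \<in> V" "i < t" for v i
    using undigits_mod_p[OF V_mat_in that(2)] digit_matrices_top[OF Y that] by simp
  have "V_mat Y (alg_of_ring m1 v w) = digits (U_mat X (m1 (undigits v) (undigits w)))"
    and "alg_of_ring m2 (V_mat Y v) (V_mat Y w) = digits (m2 (U_mat X (undigits v)) (U_mat X (undigits w)))"
    if "v \<in> V" "w \<in> V" for v w
  proof -
    show "V_mat Y (alg_of_ring m1 v w) = digits (U_mat X (m1 (undigits v) (undigits w)))"
      using that digit_matrices_socle[OF Y] ring_structs_socU[OF m1] by (simp add: alg_of_ring_def)
    have "m2 (undigits (V_mat Y v)) (undigits (V_mat Y w)) = m2 (U_mat X (undigits v)) (U_mat X (undigits w))"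
      using that top by (intro ring_structs_cong[OF m2]) simp_all
    then show "alg_of_ring m2 (V_mat Y v) (V_mat Y w) = digits (m2 (U_mat X (undigits v)) (U_mat X (undigits w)))"
      by (simp add: alg_of_ring_def)
  qed
  then have "(\<forall>v\<in>V. \<forall>w\<in>V. V_mat Y (alg_of_ring m1 v w) = alg_of_ring m2 (V_mat Y v) (V_mat Y w))
      \<longleftrightarrow> (\<forall>x\<in>U. \<forall>y\<in>U. digits (U_mat X (m1 x y)) = digits (m2 (U_mat X x) (U_mat X y)))"
    by (metis digits_in undigits_digits undigits_in)
  also have "\<dots> \<longleftrightarrow> (\<forall>x\<in>U. \<forall>y\<in>U. U_mat X (m1 x y) = m2 (U_mat X x) (U_mat X y))"
    using digits_eq_iff ring_structs_closed[OF m2] by simp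
  finally show ?thesis by simp
qed

lemma digit_matrices_struct_iso_iff:
  assumes Y: "digit_matrices X Y" and m1: "m1 \<in> RS" and m2: "m2 \<in> RS"
  shows "struct_iso U addU {} m1 m2 (U_mat X)
    \<longleftrightarrow> struct_iso V addV OpsV (alg_of_ring m1) (alg_of_ring m2) (V_mat Y)"
proof -
  have X: "U_admissible X" using Y by (simp add: digit_matrices_def)
  have Y': "V_admissible Y" using Y by (rule digit_matrices_V_admissible)
  have "bij_betw (U_mat X) U U \<longleftrightarrow> bij_betw (V_mat Y) V V"
    using U_bij_iff_inj[OF U_mat_endo[OF X]] V_bij_iff_inj[OF V_mat_endo[OF Y']] digit_matrices_inj_iff[OF Y]
    by simp
  moreover have "\<forall>x\<in>U. \<forall>y\<in>U. U_mat X (addU x y) = addU (U_mat X x) (U_mat X y)"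
    using U_mat_endo[OF X] by (simp add: U.endo_def)
  moreover have "\<forall>v\<in>V. \<forall>w\<in>V. V_mat Y (addV v w) = addV (V_mat Y v) (V_mat Y w)"
    using V_mat_endo[OF Y'] by (simp add: V.endo_def)
  moreover have "\<forall>\<phi>\<in>OpsV. \<forall>v\<in>V. V_mat Y (\<phi> v) = \<phi> (V_mat Y v)"
    using V_mat_act[OF Y'] by (auto simp: V_ops_def)
  ultimately show ?thesis
    using digit_matrices_mult_iff[OF Y m1 m2] by (simp add: struct_iso_def)
qed

lemma ring_iso_iff_alg_iso:
  assumes m1: "m1 \<in> RS" and m2: "m2 \<in> RS"
  shows "(\<exists>f. struct_iso U addU {} m1 m2 f) \<longleftrightarrow> (\<exists>g. struct_iso V addV OpsV (alg_of_ring m1) (alg_of_ring m2) g)"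
proof
  assume "\<exists>f. struct_iso U addU {} m1 m2 f"
  then obtain f where f: "struct_iso U addU {} m1 m2 f" ..
  then have endo: "U.endo f" by (rule U.struct_iso_endo)
  define X where "X = (\<lambda>i. f (unitU i))"
  have "struct_iso U addU {} m1 m2 (U_mat X)"
    using f U.struct_iso_cong[of f "U_mat X"] U_endo_eq_U_mat[OF endo] ring_structs_closed[OF m1]
    by (simp add: X_def)
  moreover have "digit_matrices X (\<lambda>i. digits (X i))"
    using digit_matrices_of_U_endo[OF endo] by (simp add: X_def)
  ultimately show "\<exists>g. struct_iso V addV OpsV (alg_of_ring m1) (alg_of_ring m2) g"
    using digit_matrices_struct_iso_iff[OF _ m1 m2] by blast
next
  assume "\<exists>g. struct_iso V addV OpsV (alg_of_ring m1) (alg_of_ring m2) g"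
  then obtain g where g: "struct_iso V addV OpsV (alg_of_ring m1) (alg_of_ring m2) g" ..
  then have endo: "V.endo g" by (rule V.struct_iso_endo)
  have g_act: "g (act c w) = act c (g w)" if "c \<in> C" "w \<in> V" for c w
    using g that by (simp add: struct_iso_def act_in_OpsV)
  define Y where "Y = (\<lambda>i. g (unitV i))"
  have "struct_iso V addV OpsV (alg_of_ring m1) (alg_of_ring m2) (V_mat Y)"
    using g V.struct_iso_cong[of g "V_mat Y"] V_endo_eq_V_mat[OF endo g_act] alg_of_ring_closed
    by (simp add: Y_def)
  moreover have "digit_matrices (\<lambda>i. undigits (Y i)) Y"
    using digit_matrices_of_V_endo[OF endo g_act[OF T_in_C]] by (simp add: Y_def)
  ultimately show "\<exists>f. struct_iso U addU {} m1 m2 f"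
    using digit_matrices_struct_iso_iff[OF _ m1 m2] by blast
qed

abbreviation "ring_iso \<equiv> iso_rel RS U addU {}"
abbreviation "alg_iso \<equiv> iso_rel AS V addV OpsV"

lemma equiv_ring_iso: "equiv RS ring_iso"
  by (rule U.equiv_iso_rel_on) (rule ring_structs_closed)

lemma equiv_alg_iso: "equiv AS alg_iso"
  by (rule V.equiv_iso_rel_on) (rule alg_structs_closed)

lemma alg_of_ring_iso_iff:
  "m1 \<in> RS \<Longrightarrow> m2 \<in> RS \<Longrightarrow> (alg_of_ring m1, alg_of_ring m2) \<in> alg_iso \<longleftrightarrow> (m1, m2) \<in> ring_iso"
  by (simp add: iso_rel_def alg_of_ring_in_alg_structs ring_iso_iff_alg_iso)

lemma alg_of_ring_ring_of_alg_iso: "a \<in> AS \<Longrightarrow> (alg_of_ring (ring_of_alg a), a) \<in> alg_iso"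
  using struct_iso_id[of V "alg_of_ring (ring_of_alg a)" a addV OpsV]
  by (auto simp: iso_rel_def alg_of_ring_ring_of_alg alg_of_ring_in_alg_structs ring_of_alg_in_ring_structs)

lemma ring_iso_nilpotent:
  assumes "(m, m') \<in> ring_iso"
  shows "nilpotent_alg U addU U_zero negU {} m \<longleftrightarrow> nilpotent_alg U addU U_zero negU {} m'"
proof -
  obtain f where "m \<in> RS" "m' \<in> RS" and f: "struct_iso U addU {} m m' f"
    using assms by (auto simp: iso_rel_def)
  then show ?thesis by (intro U.struct_iso_nilpotent[OF f]) (simp_all add: ring_structs_closed)
qed

lemma alg_iso_nilpotent:
  assumes "(a, a') \<in> alg_iso"
  shows "nilpotent_alg V addV V_zero negV OpsV a \<longleftrightarrow> nilpotent_alg V addV V_zero negV OpsV a'"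
proof -
  obtain g where "a \<in> AS" "a' \<in> AS" and g: "struct_iso V addV OpsV a a' g"
    using assms by (auto simp: iso_rel_def)
  then show ?thesis by (intro V.struct_iso_nilpotent[OF g]) (simp_all add: alg_structs_closed)
qed

definition class_map ::
    "((nat \<Rightarrow> int) \<Rightarrow> (nat \<Rightarrow> int) \<Rightarrow> nat \<Rightarrow> int) set \<Rightarrow> ((nat \<Rightarrow> nat \<Rightarrow> int) \<Rightarrow> (nat \<Rightarrow> nat \<Rightarrow> int) \<Rightarrow> nat \<Rightarrow> nat \<Rightarrow> int) set" where
  "class_map X = alg_iso `` alg_of_ring ` X"

lemma bij_betw_class_map: "bij_betw class_map (RS // ring_iso) (AS // alg_iso)"
  unfolding class_map_def[abs_def]
proof (rule bij_betw_quotient_map[OF equiv_ring_iso equiv_alg_iso])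
  show "\<exists>m\<in>RS. (alg_of_ring m, a) \<in> alg_iso" if "a \<in> AS" for a
    using that alg_of_ring_ring_of_alg_iso ring_of_alg_in_ring_structs by blast
qed (auto simp: alg_of_ring_in_alg_structs alg_of_ring_iso_iff)

lemma class_map_lie_classes:
  "class_map ` {X \<in> RS // ring_iso. \<exists>m\<in>X. is_lie U addU U_zero m}
    = {Y \<in> AS // alg_iso. \<exists>a\<in>Y. is_lie V addV V_zero a}"
  unfolding class_map_def[abs_def]
proof (rule image_quotient_map_classes_with[OF equiv_ring_iso equiv_alg_iso])
  show "(alg_of_ring m1, alg_of_ring m2) \<in> alg_iso" if "(m1, m2) \<in> ring_iso" for m1 m2
    using that alg_of_ring_iso_iff by (auto simp: iso_rel_def)
  show "\<exists>m\<in>RS. is_lie U addU U_zero m \<and> (alg_of_ring m, a) \<in> alg_iso"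
    if "a \<in> AS" "is_lie V addV V_zero a" for a
    using that alg_of_ring_ring_of_alg_iso ring_of_alg_in_ring_structs ring_of_alg_is_lie by blast
qed (auto simp: alg_of_ring_in_alg_structs alg_of_ring_is_lie)

lemma class_map_nilpotent:
  "\<forall>X\<in>RS // ring_iso. \<forall>m\<in>X. \<forall>a\<in>class_map X.
    nilpotent_alg U addU U_zero negU {} m \<longleftrightarrow> nilpotent_alg V addV V_zero negV OpsV a"
  unfolding class_map_def
  by (rule quotient_map_invariant[OF equiv_ring_iso equiv_alg_iso])
    (simp_all add: ring_iso_nilpotent alg_iso_nilpotent alg_of_ring_nilpotent)

end

theorem theorem2p1:
  fixes p n :: nat and lam :: "nat list"
  assumes "prime p" and "is_partition lam n"
  shows "\<exists>\<Phi>. bij_betw \<Phi> (ring_classes p lam) (alg_classes p n lam) \<and>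
     \<Phi> ` {X \<in> ring_classes p lam. \<exists>m\<in>X. is_lie (U_car p lam) (U_add p lam) U_zero m}
       = {Y \<in> alg_classes p n lam. \<exists>a\<in>Y. is_lie (V_car p lam) (V_add p lam) V_zero a} \<and>
     (\<forall>X\<in>ring_classes p lam. \<forall>m\<in>X. \<forall>a\<in>\<Phi> X.
        is_lie (U_car p lam) (U_add p lam) U_zero m \<longrightarrow>
        is_lie (V_car p lam) (V_add p lam) V_zero a \<longrightarrow>
        (nilpotent_alg (U_car p lam) (U_add p lam) U_zero (U_neg p lam) {} m \<longleftrightarrow>
         nilpotent_alg (V_car p lam) (V_add p lam) V_zero (V_neg p lam) (V_ops p n lam) a))"
proof -
  interpret prime_partition p n lam using assms by unfold_locales
  show ?thesis
    unfolding ring_classes_def alg_classes_def iso_classes_eq_quotient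
    by (intro exI[of _ class_map] conjI bij_betw_class_map class_map_lie_classes)
      (use class_map_nilpotent in blast)
qed

end
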